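(* Let $X$ be a complete metric space and $\mathcal Z_{\mathcal S}=(X,(\phi_j)_{j=0}^{n-1},(\rho_j)_{j=0}^{n-1})$ a Matkowski contractive GIFZS of degree $m$. Then there is a unique $u_{\mathcal Z}\in\mathcal F_X^*$ with $$u_{\mathcal Z}=\mathcal Z_{\mathcal S}(u_{\mathcal Z},\dots,u_{\mathcal Z})=\bigvee_{j=0}^{n-1}\rho_j(\phi_j(u_{\mathcal Z}\times\cdots\times u_{\mathcal Z})).$$ Moreover, for all $u_0,\dots,u_{m-1}\in\mathcal F_X^*$, the sequence defined by $u_{k+m}=\mathcal Z_{\mathcal S}(u_{k+m-1},u_{k+m-2},\dots,u_k)$, $k\ge0$, converges to $u_{\mathcal Z}$ in $d_\infty$.
   Context: A fuzzy subset of $X$ is $u:X\to[0,1]$. For $\alpha\in(0,1]$, $[u]^\alpha=\{x:u(x)\ge\alpha\}$, $[u]^0=\overline{\{x:u(x)>0\}}$. $\mathcal F_X^*$: fuzzy subsets that are normal, usc, compactly supported. $h$: Hausdorff metric; $d_\infty(u,v)=\sup_{\alpha\in[0,1]}h([u]^\alpha,[v]^\alpha)$. $X^m$ carries the maximum metric $d^m$. For $T:Z\to Y$, $T(u)(y)=\sup\{u(z):T(z)=y\}$ if $y\in T(Z)$, else $0$; $\rho(u)=\rho\circ u$; $(u_0\times\cdots\times u_{m-1})(x_0,\dots,x_{m-1})=\min_iu_i(x_i)$; $\vee$ is pointwise max. A family $(\rho_j)$ of maps $[0,1]\to[0,1]$ is admissible if each is nondecreasing, right continuous, $\rho_j(0)=0$,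 and $\rho_j(1)=1$ for some $j$. $f:X^m\to X$ is a generalized Matkowski contraction if $d(f(x),f(y))\le\varphi(d^m(x,y))$ for some nondecreasing $\varphi:[0,\infty)\to[0,\infty)$ with $\varphi^{(k)}(t)\to0$ for all $t>0$. A GIFZS of degree $m$ is $(X,(\phi_j),(\rho_j))$ with continuous $\phi_j:X^m\to X$ and $(\rho_j)$ admissible; it is Matkowski contractive if each $\phi_j$ is a generalized Matkowski contraction. Operator: $\mathcal Z_{\mathcal S}(u_0,\dots,u_{m-1})=\bigvee_j\rho_j(\phi_j(u_0\times\cdots\times u_{m-1}))$. *)

theory Defs
  imports "HOL-Analysis.Analysis"
begin

text \<open>Fuzzy subsets of a metric space X (here a type 'a) are maps 'a \<Rightarrow> real with
  values in [0,1]. Points of X^m are lists of length m.\<close>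

definition level :: "('a::topological_space \<Rightarrow> real) \<Rightarrow> real \<Rightarrow> 'a set" where
  "level u \<alpha> = (if \<alpha> = 0 then closure {x. u x > 0} else {x. u x \<ge> \<alpha>})"

definition usc :: "('a::topological_space \<Rightarrow> real) \<Rightarrow> bool" where
  "usc u \<longleftrightarrow> (\<forall>x. \<forall>e>0. eventually (\<lambda>y. u y < u x + e) (nhds x))"

definition Fstar :: "('a::metric_space \<Rightarrow> real) set" where
  "Fstar = {u. (\<forall>x. 0 \<le> u x \<and> u x \<le> 1) \<and> (\<exists>x. u x = 1) \<and> usc u \<and> compact (level u 0)}"

definition hausdorff :: "'a::metric_space set \<Rightarrow> 'a set \<Rightarrow> real" where
  "hausdorff A B = max (SUP a\<in>A. infdist a B) (SUP b\<in>B. infdist b A)"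

definition d_inf :: "('a::metric_space \<Rightarrow> real) \<Rightarrow> ('a \<Rightarrow> real) \<Rightarrow> real" where
  "d_inf u v = (SUP \<alpha>\<in>{0..1}. hausdorff (level u \<alpha>) (level v \<alpha>))"

definition Xpow :: "nat \<Rightarrow> 'a list set" where
  "Xpow m = {xs. length xs = m}"

definition dmax :: "nat \<Rightarrow> 'a::metric_space list \<Rightarrow> 'a list \<Rightarrow> real" where
  "dmax m xs ys = (MAX i\<in>{..<m}. dist (xs ! i) (ys ! i))"

definition cont_m :: "nat \<Rightarrow> ('a::metric_space list \<Rightarrow> 'a) \<Rightarrow> bool" where
  "cont_m m f \<longleftrightarrow> (\<forall>x\<in>Xpow m. \<forall>e>0. \<exists>d>0. \<forall>y\<in>Xpow m. dmax m x y < d \<longrightarrow> dist (f y) (f x) < e)"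

definition gen_matkowski :: "nat \<Rightarrow> ('a::metric_space list \<Rightarrow> 'a) \<Rightarrow> bool" where
  "gen_matkowski m f \<longleftrightarrow> (\<exists>\<phi>::real \<Rightarrow> real. mono_on {0..} \<phi> \<and> \<phi> ` {0..} \<subseteq> {0..} \<and>
      (\<forall>t>0. (\<lambda>k. (\<phi> ^^ k) t) \<longlonglongrightarrow> 0) \<and>
      (\<forall>x\<in>Xpow m. \<forall>y\<in>Xpow m. dist (f x) (f y) \<le> \<phi> (dmax m x y)))"

definition admissible :: "nat \<Rightarrow> (nat \<Rightarrow> real \<Rightarrow> real) \<Rightarrow> bool" where
  "admissible n \<rho> \<longleftrightarrow> (\<forall>j<n. (\<forall>t\<in>{0..1}. 0 \<le> \<rho> j t \<and> \<rho> j t \<le> 1) \<and> mono_on {0..1} (\<rho> j) \<and>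
      (\<forall>t\<in>{0..<1}. continuous (at t within {t..1}) (\<rho> j)) \<and> \<rho> j 0 = 0)
    \<and> (\<exists>j<n. \<rho> j 1 = 1)"

definition zext :: "'z set \<Rightarrow> ('z \<Rightarrow> 'y) \<Rightarrow> ('z \<Rightarrow> real) \<Rightarrow> 'y \<Rightarrow> real" where
  "zext Z T u y = (if y \<in> T ` Z then (SUP z\<in>{z\<in>Z. T z = y}. u z) else 0)"

definition fprod :: "nat \<Rightarrow> ('a \<Rightarrow> real) list \<Rightarrow> 'a list \<Rightarrow> real" where
  "fprod m us xs = (MIN i\<in>{..<m}. (us ! i) (xs ! i))"

definition ZS :: "nat \<Rightarrow> nat \<Rightarrow> (nat \<Rightarrow> 'a list \<Rightarrow> 'a) \<Rightarrow> (nat \<Rightarrow> real \<Rightarrow> real)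
    \<Rightarrow> ('a \<Rightarrow> real) list \<Rightarrow> 'a \<Rightarrow> real" where
  "ZS m n \<phi> \<rho> us x = (MAX j\<in>{..<n}. \<rho> j (zext (Xpow m) (\<phi> j) (fprod m us) x))"

end

theory Submission
  imports Defs
begin

text \<open>The \<open>\<alpha>\<close>-levels of \<open>ZS m n \<phi> \<rho> us\<close> are finite unions of images \<open>\<phi> j ` P\<close>, where \<open>P\<close> is a
  product of levels of the \<open>us ! i\<close> at the generalized inverse of \<open>\<rho> j\<close> at \<open>\<alpha>\<close>. Hence \<open>ZS\<close>
  maps \<open>Fstar\<close> into itself, and a comparison function \<open>\<Psi>\<close> common to all \<open>\<phi> j\<close> gives
  \<open>d_inf (ZS us) (ZS vs) \<le> \<Psi> (max\<^sub>i d_inf (us ! i) (vs ! i))\<close>. The space \<open>(Fstar, d_inf)\<close> is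
  complete: the levels of a Cauchy sequence converge in the Hausdorff metric to their Kuratowski lower
  limits, which are the levels of a fuzzy set. Matkowski's fixed point theorem for the diagonal
  \<open>u \<mapsto> ZS (replicate m u)\<close> gives the unique fixed point; along the \<open>m\<close>-step recursion the
  maximum of \<open>m\<close> consecutive distances to it is dominated by the iterates of \<open>\<Psi>\<close>.\<close>

section \<open>The Hausdorff distance of nonempty compact sets\<close>

lemma compact_infdist_attained:
  fixes B :: "'a::metric_space set"
  assumes "compact B" "B \<noteq> {}"
  obtains b where "b \<in> B" "infdist a B = dist a b"
proof -
  have "continuous_on B (dist a)" by (intro continuous_intros)
  then obtain b where b: "b \<in> B" "\<And>y. y \<in> B \<Longrightarrow> dist a b \<le> dist a y"
    using continuous_attains_inf[OF assms] by blast
  have "infdist a B = dist a b"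
  proof (rule antisym)
    show "infdist a B \<le> dist a b" using b(1) by (rule infdist_le)
    show "dist a b \<le> infdist a B"
      unfolding infdist_notempty[OF assms(2)] by (rule cINF_greatest) (use assms b in auto)
  qed
  with b that show ?thesis by blast
qed

lemma bdd_above_infdist_compact:
  fixes A B :: "'a::metric_space set"
  assumes "compact A"
  shows "bdd_above ((\<lambda>a. infdist a B) ` A)"
proof -
  have "compact ((\<lambda>a. infdist a B) ` A)"
    by (rule compact_continuous_image) (intro continuous_intros, fact)
  thus ?thesis by (intro bounded_imp_bdd_above compact_imp_bounded)
qed

lemma hausdorff_le_iff:
  fixes A B :: "'a::metric_space set"
  assumes "compact A" "A \<noteq> {}" "compact B" "B \<noteq> {}"
  shows "hausdorff A B \<le> e \<longleftrightarrow> (\<forall>a\<in>A. infdist a B \<le> e) \<and> (\<forall>b\<in>B. infdist b A \<le> e)"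
  unfolding hausdorff_def max.bounded_iff
  using bdd_above_infdist_compact[OF assms(1), of B] bdd_above_infdist_compact[OF assms(3), of A] assms(2,4)
  by (simp add: cSUP_le_iff)

lemma hausdorff_commute: "hausdorff A B = hausdorff B A"
  unfolding hausdorff_def by (simp add: max.commute)

lemma infdist_le_hausdorff:
  fixes A B :: "'a::metric_space set"
  assumes "compact A" "A \<noteq> {}" "compact B" "B \<noteq> {}" "a \<in> A"
  shows "infdist a B \<le> hausdorff A B"
  using hausdorff_le_iff[OF assms(1-4), of "hausdorff A B"] assms(5) by auto

lemma hausdorff_nonneg:
  fixes A B :: "'a::metric_space set"
  assumes "compact A" "A \<noteq> {}" "compact B" "B \<noteq> {}"
  shows "0 \<le> hausdorff A B"
  using infdist_le_hausdorff[OF assms] assms(2) infdist_nonneg by (meson ex_in_conv order_trans)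

lemma hausdorff_self:
  fixes A :: "'a::metric_space set"
  assumes "compact A" "A \<noteq> {}"
  shows "hausdorff A A = 0"
  using hausdorff_le_iff[OF assms assms, of 0] hausdorff_nonneg[OF assms assms] by auto

lemma infdist_le_infdist_add_hausdorff:
  fixes B C :: "'a::metric_space set"
  assumes "compact B" "B \<noteq> {}" "compact C" "C \<noteq> {}"
  shows "infdist a C \<le> infdist a B + hausdorff B C"
proof -
  obtain b where b: "b \<in> B" "infdist a B = dist a b"
    using compact_infdist_attained[OF assms(1,2)] by blast
  have "infdist a C \<le> infdist b C + dist a b" by (rule infdist_triangle)
  also have "infdist b C \<le> hausdorff B C" using infdist_le_hausdorff[OF assms b(1)] .
  finally show ?thesis using b by simp
qed

lemma hausdorff_triangle:
  fixes A B C :: "'a::metric_space set"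
  assumes A: "compact A" "A \<noteq> {}" and B: "compact B" "B \<noteq> {}" and C: "compact C" "C \<noteq> {}"
  shows "hausdorff A C \<le> hausdorff A B + hausdorff B C"
proof -
  have "infdist a C \<le> hausdorff A B + hausdorff B C" if "a \<in> A" for a
    using infdist_le_infdist_add_hausdorff[OF B C, of a] infdist_le_hausdorff[OF A B that] by linarith
  moreover have "infdist c A \<le> hausdorff A B + hausdorff B C" if "c \<in> C" for c
    using infdist_le_infdist_add_hausdorff[OF B A, of c] infdist_le_hausdorff[OF C B that]
      hausdorff_commute[of A B] hausdorff_commute[of C B]
    by linarith
  ultimately show ?thesis using hausdorff_le_iff[OF A C] by blast
qed

lemma hausdorff_le_0_imp_eq:
  fixes A B :: "'a::metric_space set"
  assumes "compact A" "A \<noteq> {}" "compact B" "B \<noteq> {}" "hausdorff A B \<le> 0"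
  shows "A = B"
proof -
  have "\<forall>a\<in>A. infdist a B \<le> 0" "\<forall>b\<in>B. infdist b A \<le> 0"
    using hausdorff_le_iff[OF assms(1-4)] assms(5) by auto
  hence "\<forall>a\<in>A. a \<in> B" "\<forall>b\<in>B. b \<in> A"
    using in_closed_iff_infdist_zero assms compact_imp_closed infdist_nonneg by (metis order.antisym)+
  thus ?thesis by blast
qed

lemma hausdorff_le_of_dist_le:
  fixes A B :: "'a::metric_space set"
  assumes "compact A" "A \<noteq> {}" "compact B" "B \<noteq> {}"
    and "\<And>x y. x \<in> A \<union> B \<Longrightarrow> y \<in> A \<union> B \<Longrightarrow> dist x y \<le> r"
  shows "hausdorff A B \<le> r"
proof -
  obtain a b where "a \<in> A" "b \<in> B" using assms by blast
  thus ?thesis unfolding hausdorff_le_iff[OF assms(1-4)] using assms(5) by (meson UnI1 UnI2 infdist_le2)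
qed

lemma FstarD:
  assumes "u \<in> Fstar"
  shows "0 \<le> u x" "u x \<le> 1" "\<exists>x. u x = 1" "usc u" "compact (level u 0)"
  using assms unfolding Fstar_def by auto

lemma usc_closed_superlevel:
  fixes u :: "'a::topological_space \<Rightarrow> real"
  assumes "usc u"
  shows "closed {x. \<alpha> \<le> u x}"
proof -
  have "open {x. u x < \<alpha>}"
  proof (subst open_subopen, intro ballI)
    fix x assume "x \<in> {x. u x < \<alpha>}"
    hence "\<alpha> - u x > 0" by simp
    with assms have "eventually (\<lambda>y. u y < u x + (\<alpha> - u x)) (nhds x)"
      unfolding usc_def by blast
    then obtain S where "open S" "x \<in> S" "\<forall>y\<in>S. u y < \<alpha>" unfolding eventually_nhds by auto
    thus "\<exists>T. open T \<and> x \<in> T \<and> T \<subseteq> {x. u x < \<alpha>}" by blast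
  qed
  moreover have "- {x. \<alpha> \<le> u x} = {x. u x < \<alpha>}" by auto
  ultimately show ?thesis unfolding closed_def by simp
qed

lemma usc_if_closed_superlevels:
  fixes w :: "'a::topological_space \<Rightarrow> real"
  assumes "\<And>x. 0 \<le> w x" "\<And>x. w x \<le> 1"
    and "\<And>\<alpha>. 0 < \<alpha> \<Longrightarrow> \<alpha> \<le> 1 \<Longrightarrow> closed {x. \<alpha> \<le> w x}"
  shows "usc w"
  unfolding usc_def
proof (intro allI impI)
  fix x and e :: real assume e: "e > 0"
  show "eventually (\<lambda>y. w y < w x + e) (nhds x)"
  proof (cases "w x + e \<le> 1")
    case True
    have "open (- {y. w x + e \<le> w y})" using assms(3)[OF _ True] assms(1)[of x] e by auto
    moreover have "x \<in> - {y. w x + e \<le> w y}" using e by auto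
    ultimately have "eventually (\<lambda>y. y \<in> - {y. w x + e \<le> w y}) (nhds x)"
      by (rule eventually_nhds_in_open)
    thus ?thesis by eventually_elim auto
  next
    case False
    thus ?thesis using assms(2) by (intro always_eventually) (smt (verit))
  qed
qed

lemma level_pos: "\<alpha> \<noteq> 0 \<Longrightarrow> level u \<alpha> = {x. \<alpha> \<le> u x}"
  unfolding level_def by simp

lemma level_subset_level_0: "0 < \<alpha> \<Longrightarrow> level u \<alpha> \<subseteq> level u 0"
  unfolding level_def using closure_subset by force

lemma level_antimono:
  assumes "0 \<le> \<alpha>" "\<alpha> \<le> \<beta>"
  shows "level u \<beta> \<subseteq> level u \<alpha>"
proof (cases "\<alpha> = 0")
  case True thus ?thesis using level_subset_level_0[of \<beta> u] assms by (cases "\<beta> = 0") auto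
next
  case False
  thus ?thesis using assms by (auto simp: level_pos)
qed

lemma compact_level:
  assumes "u \<in> Fstar" "0 \<le> \<alpha>"
  shows "compact (level u \<alpha>)"
proof (cases "\<alpha> = 0")
  case True thus ?thesis using FstarD[OF assms(1)] by simp
next
  case False
  hence "level u \<alpha> = level u 0 \<inter> {x. \<alpha> \<le> u x}"
    using level_subset_level_0[of \<alpha> u] assms(2) level_pos[OF False] by auto
  thus ?thesis using FstarD[OF assms(1)] usc_closed_superlevel by (metis compact_Int_closed)
qed

lemma level_nonempty:
  assumes "u \<in> Fstar" "\<alpha> \<le> 1"
  shows "level u \<alpha> \<noteq> {}"
proof -
  obtain x where x: "u x = 1" using FstarD[OF assms(1)] by blast
  have "x \<in> level u \<alpha>"
  proof (cases "\<alpha> = 0")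
    case True
    thus ?thesis using x closure_subset unfolding level_def by fastforce
  qed (use x assms(2) in \<open>auto simp: level_pos\<close>)
  thus ?thesis by blast
qed

lemma level_compact_nonempty:
  assumes "u \<in> Fstar" "\<alpha> \<in> {0..1}"
  shows "compact (level u \<alpha>)" "level u \<alpha> \<noteq> {}"
  using assms compact_level level_nonempty by auto

lemma bdd_above_hausdorff_levels:
  fixes u v :: "'a::metric_space \<Rightarrow> real"
  assumes "u \<in> Fstar" "v \<in> Fstar"
  shows "bdd_above ((\<lambda>\<alpha>. hausdorff (level u \<alpha>) (level v \<alpha>)) ` {0..1})"
proof -
  have "bounded (level u 0 \<union> level v 0)"
    using FstarD(5)[OF assms(1)] FstarD(5)[OF assms(2)] by (intro compact_imp_bounded compact_Un)
  then obtain c r where cr: "\<forall>y\<in>level u 0 \<union> level v 0. dist c y \<le> r" unfolding bounded_def by blast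
  have "hausdorff (level u \<alpha>) (level v \<alpha>) \<le> 2 * r" if "\<alpha> \<in> {0..1}" for \<alpha>
  proof (rule hausdorff_le_of_dist_le)
    show "compact (level u \<alpha>)" "level u \<alpha> \<noteq> {}" "compact (level v \<alpha>)" "level v \<alpha> \<noteq> {}"
      using level_compact_nonempty[OF assms(1) that] level_compact_nonempty[OF assms(2) that] by auto
    fix x y assume "x \<in> level u \<alpha> \<union> level v \<alpha>" "y \<in> level u \<alpha> \<union> level v \<alpha>"
    hence "dist c x \<le> r" "dist c y \<le> r"
      using level_antimono[of 0 \<alpha> u] level_antimono[of 0 \<alpha> v] that cr by auto
    thus "dist x y \<le> 2 * r" by (smt (verit) dist_commute dist_triangle)
  qed
  thus ?thesis by (intro bdd_aboveI2[where M = "2 * r"]) auto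
qed

lemma d_inf_le_iff:
  fixes u v :: "'a::metric_space \<Rightarrow> real"
  assumes "u \<in> Fstar" "v \<in> Fstar"
  shows "d_inf u v \<le> e \<longleftrightarrow> (\<forall>\<alpha>\<in>{0..1}. hausdorff (level u \<alpha>) (level v \<alpha>) \<le> e)"
  unfolding d_inf_def using bdd_above_hausdorff_levels[OF assms] by (simp add: cSUP_le_iff)

lemma hausdorff_level_le_d_inf:
  fixes u v :: "'a::metric_space \<Rightarrow> real"
  assumes "u \<in> Fstar" "v \<in> Fstar" "\<alpha> \<in> {0..1}"
  shows "hausdorff (level u \<alpha>) (level v \<alpha>) \<le> d_inf u v"
  using d_inf_le_iff[OF assms(1,2)] assms(3) by blast

lemma d_inf_nonneg:
  fixes u v :: "'a::metric_space \<Rightarrow> real"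
  assumes "u \<in> Fstar" "v \<in> Fstar"
  shows "0 \<le> d_inf u v"
proof -
  have "0 \<le> hausdorff (level u 0) (level v 0)"
    using hausdorff_nonneg[OF level_compact_nonempty[OF assms(1)] level_compact_nonempty[OF assms(2)]]
    by simp
  thus ?thesis using hausdorff_level_le_d_inf[OF assms, of 0] by simp
qed

lemma d_inf_self:
  fixes u :: "'a::metric_space \<Rightarrow> real"
  assumes "u \<in> Fstar"
  shows "d_inf u u = 0"
proof -
  have "\<forall>\<alpha>\<in>{0..1}. hausdorff (level u \<alpha>) (level u \<alpha>) \<le> 0"
    using hausdorff_self[OF level_compact_nonempty[OF assms]] by simp
  thus ?thesis using d_inf_le_iff[OF assms assms, of 0] d_inf_nonneg[OF assms assms] by simp
qed

lemma d_inf_commute: "d_inf u v = d_inf v u"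
  unfolding d_inf_def using hausdorff_commute by metis

lemma d_inf_triangle:
  fixes u v w :: "'a::metric_space \<Rightarrow> real"
  assumes "u \<in> Fstar" "v \<in> Fstar" "w \<in> Fstar"
  shows "d_inf u w \<le> d_inf u v + d_inf v w"
  unfolding d_inf_le_iff[OF assms(1,3)]
proof
  fix \<alpha> :: real assume \<alpha>: "\<alpha> \<in> {0..1}"
  have "hausdorff (level u \<alpha>) (level w \<alpha>)
      \<le> hausdorff (level u \<alpha>) (level v \<alpha>) + hausdorff (level v \<alpha>) (level w \<alpha>)"
    by (rule hausdorff_triangle[OF level_compact_nonempty[OF assms(1) \<alpha>]
          level_compact_nonempty[OF assms(2) \<alpha>] level_compact_nonempty[OF assms(3) \<alpha>]])
  thus "hausdorff (level u \<alpha>) (level w \<alpha>) \<le> d_inf u v + d_inf v w"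
    using hausdorff_level_le_d_inf[OF assms(1,2) \<alpha>] hausdorff_level_le_d_inf[OF assms(2,3) \<alpha>] by linarith
qed

lemma d_inf_le_0_imp_eq:
  fixes u v :: "'a::metric_space \<Rightarrow> real"
  assumes u: "u \<in> Fstar" and v: "v \<in> Fstar" and "d_inf u v \<le> 0"
  shows "u = v"
proof -
  have eq: "level u \<alpha> = level v \<alpha>" if "\<alpha> \<in> {0..1}" for \<alpha>
    using hausdorff_le_0_imp_eq[OF level_compact_nonempty[OF u that] level_compact_nonempty[OF v that]]
      hausdorff_level_le_d_inf[OF u v that] assms(3) by simp
  have "v x \<le> u x" if "u \<in> Fstar" "v \<in> Fstar" "\<And>\<alpha>. \<alpha> \<in> {0..1} \<Longrightarrow> level u \<alpha> = level v \<alpha>"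
    for u v :: "'a \<Rightarrow> real" and x
  proof (cases "v x = 0")
    case False
    have "v x \<in> {0..1}" using FstarD(1,2)[OF that(2)] by simp
    thus ?thesis using that(3)[of "v x"] False by (auto simp: level_pos)
  qed (use FstarD(1) that in auto)
  from this[OF u v eq] this[OF v u] eq show ?thesis by (metis antisym ext)
qed

text \<open>Since \<open>level u 0\<close> is the closure of the union of the positive levels, the \<open>0\<close>-level never
  increases the supremum in \<open>d_inf\<close>.\<close>

lemma infdist_level_0_le:
  fixes u v :: "'a::metric_space \<Rightarrow> real"
  assumes u: "u \<in> Fstar" and v: "v \<in> Fstar"
    and e: "\<And>\<alpha>. 0 < \<alpha> \<Longrightarrow> \<alpha> \<le> 1 \<Longrightarrow> hausdorff (level u \<alpha>) (level v \<alpha>) \<le> e"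
    and a: "a \<in> level u 0"
  shows "infdist a (level v 0) \<le> e"
proof -
  let ?S = "{y. infdist y (level v 0) \<le> e}"
  have "{x. u x > 0} \<subseteq> ?S"
  proof
    fix x assume "x \<in> {x. u x > 0}"
    hence \<alpha>: "0 < u x" "u x \<le> 1" using FstarD(2)[OF u] by auto
    have \<alpha>': "u x \<in> {0..1}" using \<alpha> by simp
    have "infdist x (level v 0) \<le> infdist x (level v (u x))"
      by (rule infdist_mono[OF level_subset_level_0[OF \<alpha>(1)] level_nonempty[OF v \<alpha>(2)]])
    also have "\<dots> \<le> hausdorff (level u (u x)) (level v (u x))"
      by (rule infdist_le_hausdorff[OF level_compact_nonempty[OF u \<alpha>'] level_compact_nonempty[OF v \<alpha>']])
        (use \<alpha> in \<open>simp add: level_pos\<close>)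
    also have "\<dots> \<le> e" using e \<alpha> by blast
    finally show "x \<in> ?S" by simp
  qed
  moreover have "closed ?S" by (rule closed_Collect_le) (intro continuous_intros)+
  ultimately have "closure {x. u x > 0} \<subseteq> ?S" by (rule closure_minimal)
  thus ?thesis using a by (auto simp: level_def)
qed

lemma d_inf_le_if_positive_levels:
  fixes u v :: "'a::metric_space \<Rightarrow> real"
  assumes u: "u \<in> Fstar" and v: "v \<in> Fstar"
    and e: "\<And>\<alpha>. 0 < \<alpha> \<Longrightarrow> \<alpha> \<le> 1 \<Longrightarrow> hausdorff (level u \<alpha>) (level v \<alpha>) \<le> e"
  shows "d_inf u v \<le> e"
proof -
  have e': "hausdorff (level v \<alpha>) (level u \<alpha>) \<le> e" if "0 < \<alpha>" "\<alpha> \<le> 1" for \<alpha>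
    using e[OF that] by (simp add: hausdorff_commute)
  have "hausdorff (level u 0) (level v 0) \<le> e"
    using hausdorff_le_iff[OF level_compact_nonempty[OF u] level_compact_nonempty[OF v]]
      infdist_level_0_le[OF u v e] infdist_level_0_le[OF v u e'] by simp
  thus ?thesis unfolding d_inf_le_iff[OF u v] using e by (metis atLeastAtMost_iff order_le_less)
qed

section \<open>Completeness of \<open>(Fstar, d_inf)\<close>\<close>

definition Kuratowski_liminf :: "(nat \<Rightarrow> 'a::metric_space set) \<Rightarrow> 'a set" where
  "Kuratowski_liminf A = {x. (\<lambda>k. infdist x (A k)) \<longlonglongrightarrow> 0}"

lemma Kuratowski_liminf_mono:
  assumes "\<And>k. A k \<subseteq> B k" "\<And>k. A k \<noteq> {}"
  shows "Kuratowski_liminf A \<subseteq> Kuratowski_liminf B"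
proof
  fix x assume "x \<in> Kuratowski_liminf A"
  hence lim: "(\<lambda>k. infdist x (A k)) \<longlonglongrightarrow> 0" unfolding Kuratowski_liminf_def by simp
  have le: "infdist x (B k) \<le> infdist x (A k)" for k by (rule infdist_mono[OF assms])
  have "(\<lambda>k. infdist x (B k)) \<longlonglongrightarrow> 0"
    by (rule tendsto_sandwich[where f = "\<lambda>k. 0" and h = "\<lambda>k. infdist x (A k)"])
      (use lim le in \<open>simp_all add: infdist_nonneg\<close>)
  thus "x \<in> Kuratowski_liminf B" unfolding Kuratowski_liminf_def by simp
qed

lemma closed_Kuratowski_liminf: "closed (Kuratowski_liminf A)"
  unfolding closed_sequential_limits
proof (intro allI impI, elim conjE)
  fix x :: "nat \<Rightarrow> 'a" and l assume x: "\<forall>n. x n \<in> Kuratowski_liminf A" and l: "x \<longlonglongrightarrow> l"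
  show "l \<in> Kuratowski_liminf A" unfolding Kuratowski_liminf_def mem_Collect_eq
  proof (rule tendstoI)
    fix \<epsilon> :: real assume \<epsilon>: "0 < \<epsilon>"
    obtain n where n: "dist (x n) l < \<epsilon> / 2"
      using tendstoD[OF l, of "\<epsilon> / 2"] \<epsilon> by (auto simp: eventually_sequentially)
    have "(\<lambda>k. infdist (x n) (A k)) \<longlonglongrightarrow> 0" using x unfolding Kuratowski_liminf_def by auto
    hence "eventually (\<lambda>k. dist (infdist (x n) (A k)) 0 < \<epsilon> / 2) sequentially"
      using \<epsilon> by (intro tendstoD) auto
    thus "eventually (\<lambda>k. dist (infdist l (A k)) 0 < \<epsilon>) sequentially"
    proof eventually_elim
      case (elim k)
      have "infdist l (A k) \<le> infdist (x n) (A k) + dist l (x n)" by (rule infdist_triangle)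
      thus ?case using elim n infdist_nonneg[of "x n" "A k"] infdist_nonneg[of l "A k"]
        by (simp add: dist_real_def dist_commute)
    qed
  qed
qed

lemma infdist_le_if_in_Kuratowski_liminf:
  fixes A :: "nat \<Rightarrow> 'a::metric_space set"
  assumes A: "\<And>k. compact (A k)" "\<And>k. A k \<noteq> {}"
    and N: "\<And>p q. N \<le> p \<Longrightarrow> N \<le> q \<Longrightarrow> hausdorff (A p) (A q) \<le> e"
    and x: "x \<in> Kuratowski_liminf A" and k: "N \<le> k"
  shows "infdist x (A k) \<le> e"
proof -
  have "eventually (\<lambda>q. infdist x (A k) \<le> infdist x (A q) + e) sequentially"
    unfolding eventually_sequentially
  proof (intro exI[of _ N] allI impI)
    fix q assume q: "N \<le> q"
    have "infdist x (A k) \<le> infdist x (A q) + hausdorff (A q) (A k)"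
      by (rule infdist_le_infdist_add_hausdorff) (use A in auto)
    thus "infdist x (A k) \<le> infdist x (A q) + e" using N[OF q k] by simp
  qed
  moreover have "(\<lambda>q. infdist x (A q) + e) \<longlonglongrightarrow> 0 + e"
    using x unfolding Kuratowski_liminf_def by (intro tendsto_add tendsto_const) auto
  ultimately have "infdist x (A k) \<le> 0 + e" by (intro tendsto_lowerbound[of "\<lambda>q. infdist x (A q) + e"]) auto
  thus ?thesis by simp
qed

lemma geometric_chain_converges:
  fixes x :: "nat \<Rightarrow> 'a::complete_space"
  assumes step: "\<And>j. dist (x j) (x (Suc j)) \<le> e / 2 ^ j"
  obtains l where "x \<longlonglongrightarrow> l" "\<And>j. dist (x j) l \<le> 2 * e / 2 ^ j"
proof -
  have tail: "dist (x j) (x (j + p)) \<le> 2 * e / 2 ^ j - 2 * e / 2 ^ (j + p)" for j p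
  proof (induction p)
    case (Suc p)
    have "dist (x j) (x (j + Suc p)) \<le> dist (x j) (x (j + p)) + dist (x (j + p)) (x (Suc (j + p)))"
      by (simp add: dist_triangle)
    also have "\<dots> \<le> 2 * e / 2 ^ j - 2 * e / 2 ^ (j + p) + e / 2 ^ (j + p)" using Suc step[of "j + p"] by simp
    also have "\<dots> = 2 * e / 2 ^ j - 2 * e / 2 ^ (j + Suc p)" by (simp add: field_simps)
    finally show ?case .
  qed simp
  have e: "0 \<le> e" using order_trans[OF zero_le_dist step[of 0]] by simp
  have tail': "dist (x j) (x (j + p)) \<le> 2 * e / 2 ^ j" for j p
    using tail[of j p] divide_nonneg_pos[OF mult_nonneg_nonneg[OF _ e], of 2 "2 ^ (j + p)"] by simp
  have small: "(\<lambda>j. 2 * e / 2 ^ j) \<longlonglongrightarrow> 0" by (rule LIMSEQ_divide_realpow_zero) simp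
  have "Cauchy x"
  proof (rule metric_CauchyI)
    fix \<epsilon> :: real assume \<epsilon>: "0 < \<epsilon>"
    have "eventually (\<lambda>j. dist (2 * e / 2 ^ j) 0 < \<epsilon> / 2) sequentially"
      using tendstoD[OF small, of "\<epsilon> / 2"] \<epsilon> by simp
    then obtain J where J: "2 * e / 2 ^ J < \<epsilon> / 2"
      using e by (auto simp: eventually_sequentially dist_real_def)
    show "\<exists>M. \<forall>m\<ge>M. \<forall>n\<ge>M. dist (x m) (x n) < \<epsilon>"
    proof (intro exI[of _ J] allI impI)
      fix p q assume "J \<le> p" "J \<le> q"
      then obtain p' q' where pq: "p = J + p'" "q = J + q'" by (metis le_add_diff_inverse)
      have "dist (x p) (x q) \<le> dist (x J) (x p) + dist (x J) (x q)" by (rule dist_triangle3)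
      also have "\<dots> \<le> 2 * (2 * e / 2 ^ J)" using tail'[of J p'] tail'[of J q'] pq by simp
      finally show "dist (x p) (x q) < \<epsilon>" using J by simp
    qed
  qed
  then obtain l where l: "x \<longlonglongrightarrow> l" using Cauchy_convergent_iff convergent_def by blast
  have "dist (x j) l \<le> 2 * e / 2 ^ j" for j
  proof -
    have "(\<lambda>p. dist (x j) (x (j + p))) \<longlonglongrightarrow> dist (x j) l"
      using LIMSEQ_ignore_initial_segment[OF l, of j] by (intro tendsto_dist tendsto_const) (simp add: add.commute)
    thus ?thesis using tail' by (intro tendsto_upperbound) auto
  qed
  with l that show ?thesis by blast
qed

lemma hausdorff_chain:
  fixes B :: "nat \<Rightarrow> 'a::metric_space set"
  assumes B: "\<And>j. compact (B j)" "\<And>j. B j \<noteq> {}"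
    and step: "\<And>j. hausdorff (B j) (B (Suc j)) \<le> r j" and a: "a \<in> B 0"
  obtains x where "x 0 = a" "\<And>j. x j \<in> B j" "\<And>j. dist (x j) (x (Suc j)) \<le> r j"
proof -
  have next_point: "\<exists>b'. b' \<in> B (Suc j) \<and> dist b b' \<le> r j" if "b \<in> B j" for b j
  proof -
    obtain b' where "b' \<in> B (Suc j)" "infdist b (B (Suc j)) = dist b b'"
      using compact_infdist_attained[OF B] by blast
    moreover have "infdist b (B (Suc j)) \<le> hausdorff (B j) (B (Suc j))"
      by (rule infdist_le_hausdorff[OF B B that])
    ultimately show ?thesis using step[of j] by auto
  qed
  define x where "x = rec_nat a (\<lambda>j b. SOME b'. b' \<in> B (Suc j) \<and> dist b b' \<le> r j)"
  have x0: "x 0 = a" and xS: "x (Suc j) = (SOME b'. b' \<in> B (Suc j) \<and> dist (x j) b' \<le> r j)" for j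
    unfolding x_def by simp_all
  have xB: "x j \<in> B j" for j
  proof (induction j)
    case (Suc j) from someI_ex[OF next_point[OF Suc]] show ?case by (simp add: xS)
  qed (simp add: x0 a)
  have "dist (x j) (x (Suc j)) \<le> r j" for j
    using someI_ex[OF next_point[OF xB[of j]]] by (simp add: xS)
  with x0 xB that show ?thesis by blast
qed

text \<open>Every point of a late \<open>A k\<close> is the start of a chain \<open>x j \<in> A (M j)\<close> with geometrically
  decreasing steps; its limit lies in the Kuratowski lower limit.\<close>

lemma near_Kuratowski_liminf:
  fixes A :: "nat \<Rightarrow> 'a::complete_space set"
  assumes A: "\<And>k. compact (A k)" "\<And>k. A k \<noteq> {}"
    and cauchy: "\<forall>e>0. \<exists>N. \<forall>p\<ge>N. \<forall>q\<ge>N. hausdorff (A p) (A q) \<le> e"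
    and N: "\<And>p q. N \<le> p \<Longrightarrow> N \<le> q \<Longrightarrow> hausdorff (A p) (A q) \<le> e"
    and e: "0 < e" and k: "N \<le> k" and a: "a \<in> A k"
  shows "\<exists>l\<in>Kuratowski_liminf A. dist a l \<le> 2 * e"
proof -
  have "\<forall>j. \<exists>N'. \<forall>p\<ge>N'. \<forall>q\<ge>N'. hausdorff (A p) (A q) \<le> e / 2 ^ Suc j"
    using cauchy e by simp
  then obtain Nf where Nf: "\<And>j p q. Nf j \<le> p \<Longrightarrow> Nf j \<le> q \<Longrightarrow> hausdorff (A p) (A q) \<le> e / 2 ^ Suc j"
    by metis
  define M where "M = rec_nat k (\<lambda>j Mj. max Mj (Nf j))"
  have M0: "M 0 = k" and MS: "M (Suc j) = max (M j) (Nf j)" for j unfolding M_def by simp_all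
  have step: "hausdorff (A (M j)) (A (M (Suc j))) \<le> e / 2 ^ j" for j
  proof (cases j)
    case 0 thus ?thesis using N k by (simp add: M0 MS)
  next
    case (Suc i)
    have "Nf i \<le> M j" using Suc by (simp add: MS)
    moreover have "M j \<le> M (Suc j)" by (simp add: MS)
    ultimately have "hausdorff (A (M j)) (A (M (Suc j))) \<le> e / 2 ^ Suc i" using Nf by simp
    thus ?thesis using Suc by simp
  qed
  obtain x where x0: "x 0 = a" and xA: "\<And>j. x j \<in> A (M j)"
    and x_step: "\<And>j. dist (x j) (x (Suc j)) \<le> e / 2 ^ j"
    by (rule hausdorff_chain[of "\<lambda>j. A (M j)" "\<lambda>j. e / 2 ^ j" a]) (use A step a M0 in auto)
  obtain l where l: "x \<longlonglongrightarrow> l" "\<And>j. dist (x j) l \<le> 2 * e / 2 ^ j"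
    using x_step by (rule geometric_chain_converges) blast
  have "(\<lambda>q. infdist l (A q)) \<longlonglongrightarrow> 0"
  proof (rule tendstoI)
    fix \<epsilon> :: real assume \<epsilon>: "0 < \<epsilon>"
    have "(\<lambda>j. 4 * e / 2 ^ j) \<longlonglongrightarrow> 0" by (rule LIMSEQ_divide_realpow_zero) simp
    hence "eventually (\<lambda>j. dist (4 * e / 2 ^ j) 0 < \<epsilon>) sequentially" using \<epsilon> by (rule tendstoD)
    then obtain J where J: "4 * e / 2 ^ J < \<epsilon>"
      using e by (auto simp: eventually_sequentially dist_real_def)
    show "eventually (\<lambda>q. dist (infdist l (A q)) 0 < \<epsilon>) sequentially"
      unfolding eventually_sequentially
    proof (intro exI[of _ "M (Suc J)"] allI impI)
      fix q assume q: "M (Suc J) \<le> q"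
      have "infdist l (A q) \<le> infdist (x (Suc J)) (A q) + dist l (x (Suc J))" by (rule infdist_triangle)
      also have "infdist (x (Suc J)) (A q) \<le> hausdorff (A (M (Suc J))) (A q)"
        by (rule infdist_le_hausdorff) (use A xA in auto)
      also have "hausdorff (A (M (Suc J))) (A q) \<le> e / 2 ^ Suc J"
        using Nf[of J "M (Suc J)" q] q by (simp add: MS)
      also have "dist l (x (Suc J)) \<le> 2 * e / 2 ^ Suc J" using l(2)[of "Suc J"] by (simp add: dist_commute)
      finally have "infdist l (A q) < 4 * e / 2 ^ J" using e by (simp add: field_simps)
      thus "dist (infdist l (A q)) 0 < \<epsilon>" using J infdist_nonneg[of l "A q"] by simp
    qed
  qed
  moreover have "dist a l \<le> 2 * e" using l(2)[of 0] by (simp add: x0)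
  ultimately show ?thesis unfolding Kuratowski_liminf_def by blast
qed

lemma compact_Kuratowski_liminf:
  fixes A :: "nat \<Rightarrow> 'a::complete_space set"
  assumes A: "\<And>k. compact (A k)" "\<And>k. A k \<noteq> {}"
    and cauchy: "\<forall>e>0. \<exists>N. \<forall>p\<ge>N. \<forall>q\<ge>N. hausdorff (A p) (A q) \<le> e"
  shows "compact (Kuratowski_liminf A)"
  unfolding compact_eq_totally_bounded
proof (intro conjI allI impI)
  show "complete (Kuratowski_liminf A)" using closed_Kuratowski_liminf complete_eq_closed by blast
  fix \<epsilon> :: real assume \<epsilon>: "0 < \<epsilon>"
  obtain N where N: "\<forall>p\<ge>N. \<forall>q\<ge>N. hausdorff (A p) (A q) \<le> \<epsilon> / 3"
    using cauchy \<epsilon> by (meson divide_pos_pos zero_less_numeral)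
  obtain c where c: "finite c" "A N \<subseteq> (\<Union>x\<in>c. ball x (\<epsilon> / 3))"
    using A(1) \<epsilon> unfolding compact_eq_totally_bounded by (meson divide_pos_pos zero_less_numeral)
  have "Kuratowski_liminf A \<subseteq> (\<Union>x\<in>c. ball x \<epsilon>)"
  proof
    fix x assume x: "x \<in> Kuratowski_liminf A"
    obtain b where b: "b \<in> A N" "infdist x (A N) = dist x b" using compact_infdist_attained[OF A(1,2)] by blast
    have "infdist x (A N) \<le> \<epsilon> / 3" using infdist_le_if_in_Kuratowski_liminf[OF A _ x] N by blast
    hence "dist b x \<le> \<epsilon> / 3" using b(2) by (simp add: dist_commute)
    moreover obtain y where y: "y \<in> c" "dist y b < \<epsilon> / 3" using b(1) c(2) by auto
    ultimately have "dist y x < \<epsilon>" using dist_triangle[of y x b] \<epsilon> by linarith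
    thus "x \<in> (\<Union>x\<in>c. ball x \<epsilon>)" using y(1) by auto
  qed
  thus "\<exists>k. finite k \<and> Kuratowski_liminf A \<subseteq> (\<Union>x\<in>k. ball x \<epsilon>)" using c(1) by blast
qed

lemma Kuratowski_liminf_nonempty:
  fixes A :: "nat \<Rightarrow> 'a::complete_space set"
  assumes A: "\<And>k. compact (A k)" "\<And>k. A k \<noteq> {}"
    and cauchy: "\<forall>e>0. \<exists>N. \<forall>p\<ge>N. \<forall>q\<ge>N. hausdorff (A p) (A q) \<le> e"
  shows "Kuratowski_liminf A \<noteq> {}"
proof -
  obtain N where "\<forall>p\<ge>N. \<forall>q\<ge>N. hausdorff (A p) (A q) \<le> 1" using cauchy by (meson zero_less_one)
  moreover obtain a where "a \<in> A N" using A by blast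
  ultimately show ?thesis using near_Kuratowski_liminf[OF A cauchy, of N 1 N a] by auto
qed

lemma hausdorff_le_Kuratowski_liminf:
  fixes A :: "nat \<Rightarrow> 'a::complete_space set"
  assumes A: "\<And>k. compact (A k)" "\<And>k. A k \<noteq> {}"
    and cauchy: "\<forall>e>0. \<exists>N. \<forall>p\<ge>N. \<forall>q\<ge>N. hausdorff (A p) (A q) \<le> e"
    and N: "\<And>p q. N \<le> p \<Longrightarrow> N \<le> q \<Longrightarrow> hausdorff (A p) (A q) \<le> e"
    and e: "0 < e" and k: "N \<le> k"
  shows "hausdorff (A k) (Kuratowski_liminf A) \<le> 2 * e"
proof -
  have "infdist y (Kuratowski_liminf A) \<le> 2 * e" if "y \<in> A k" for y
    using near_Kuratowski_liminf[OF A cauchy N e k that] by (metis infdist_le2)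
  moreover have "infdist x (A k) \<le> 2 * e" if "x \<in> Kuratowski_liminf A" for x
    using infdist_le_if_in_Kuratowski_liminf[OF A N that k] e by simp
  ultimately show ?thesis
    using hausdorff_le_iff[OF A compact_Kuratowski_liminf[OF A cauchy] Kuratowski_liminf_nonempty[OF A cauchy]]
    by blast
qed

lemma tendsto_from_below:
  fixes \<alpha> :: real
  assumes "0 < \<alpha>"
  obtains t where "\<And>k. 0 < t k" "\<And>k. t k < \<alpha>" "t \<longlonglongrightarrow> \<alpha>"
proof
  show "0 < \<alpha> - \<alpha> / real (k + 2)" "\<alpha> - \<alpha> / real (k + 2) < \<alpha>" for k
    using assms by (simp_all add: field_simps add_pos_nonneg)
  have "(\<lambda>k. \<alpha> / real (k + 2)) \<longlonglongrightarrow> 0"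
    using LIMSEQ_ignore_initial_segment[OF lim_const_over_n[of \<alpha>], of 2] by simp
  thus "(\<lambda>k. \<alpha> - \<alpha> / real (k + 2)) \<longlonglongrightarrow> \<alpha>" using tendsto_diff[OF tendsto_const, of _ 0 sequentially \<alpha>] by simp
qed

lemma usc_tendsto_le:
  fixes u :: "'a::metric_space \<Rightarrow> real"
  assumes "usc u" "y \<longlonglongrightarrow> p" "t \<longlonglongrightarrow> b" "\<And>k. t k \<le> u (y k)"
  shows "b \<le> u p"
proof (rule field_le_epsilon)
  fix e :: real assume e: "0 < e"
  have "eventually (\<lambda>q. u q < u p + e) (nhds p)" using assms(1) e unfolding usc_def by blast
  hence "eventually (\<lambda>k. u (y k) < u p + e) sequentially"
    using assms(2) unfolding filterlim_iff by blast
  hence "eventually (\<lambda>k. t k \<le> u p + e) sequentially"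
    by eventually_elim (use assms(4) in \<open>smt (verit)\<close>)
  thus "b \<le> u p + e" using assms(3) by (intro tendsto_upperbound) auto
qed

lemma infdist_level_le_if_lower_levels:
  fixes u :: "'a::metric_space \<Rightarrow> real"
  assumes u: "u \<in> Fstar" and \<alpha>: "0 < \<alpha>" "\<alpha> \<le> 1"
    and lower: "\<And>\<beta>. 0 < \<beta> \<Longrightarrow> \<beta> < \<alpha> \<Longrightarrow> infdist x (level u \<beta>) \<le> e"
  shows "infdist x (level u \<alpha>) \<le> e"
proof -
  obtain t where t: "\<And>k. 0 < t k" "\<And>k. t k < \<alpha>" "t \<longlonglongrightarrow> \<alpha>"
    using tendsto_from_below[OF \<alpha>(1)] by blast
  have "\<exists>p. p \<in> level u (t k) \<and> dist x p \<le> e" for k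
  proof -
    have tk: "t k \<in> {0..1}" using t(1,2)[of k] \<alpha> by simp
    obtain p where "p \<in> level u (t k)" "infdist x (level u (t k)) = dist x p"
      using compact_infdist_attained[OF level_compact_nonempty[OF u tk]] by blast
    thus ?thesis using lower[OF t(1)[of k] t(2)[of k]] by auto
  qed
  then obtain p where p: "\<And>k. p k \<in> level u (t k)" "\<And>k. dist x (p k) \<le> e" by metis
  have "\<forall>k. p k \<in> level u 0" using p(1) level_subset_level_0[OF t(1)] by blast
  moreover have "seq_compact (level u 0)" using FstarD(5)[OF u] compact_imp_seq_compact by blast
  ultimately obtain q r where qr: "q \<in> level u 0" "strict_mono r" "(p \<circ> r) \<longlonglongrightarrow> q"
    using seq_compactE by metis
  have "t (r k) \<le> u (p (r k))" for k using p(1)[of "r k"] t(1)[of "r k"] by (simp add: level_pos)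
  hence "\<alpha> \<le> u q"
    using usc_tendsto_le[OF FstarD(4)[OF u] qr(3) LIMSEQ_subseq_LIMSEQ[OF t(3) qr(2)]] by simp
  hence "q \<in> level u \<alpha>" using \<alpha> by (simp add: level_pos)
  moreover have "dist x q \<le> e"
    using p(2) by (intro tendsto_upperbound[OF tendsto_dist[OF tendsto_const qr(3)]]) auto
  ultimately show ?thesis by (meson infdist_le2)
qed

definition fuzzy_of_levels :: "(real \<Rightarrow> 'a set) \<Rightarrow> 'a \<Rightarrow> real" where
  "fuzzy_of_levels L x = Sup (insert 0 {\<alpha>. 0 < \<alpha> \<and> \<alpha> \<le> 1 \<and> x \<in> L \<alpha>})"

locale level_family =
  fixes L :: "real \<Rightarrow> 'a::metric_space set"
  assumes compact: "\<And>\<alpha>. 0 \<le> \<alpha> \<Longrightarrow> \<alpha> \<le> 1 \<Longrightarrow> compact (L \<alpha>)"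
    and nonempty: "L 1 \<noteq> {}"
    and antimono: "\<And>\<alpha> \<beta>. 0 \<le> \<alpha> \<Longrightarrow> \<alpha> \<le> \<beta> \<Longrightarrow> \<beta> \<le> 1 \<Longrightarrow> L \<beta> \<subseteq> L \<alpha>"
    and left_closed: "\<And>x \<alpha>. 0 < \<alpha> \<Longrightarrow> \<alpha> \<le> 1 \<Longrightarrow> (\<And>\<beta>. 0 < \<beta> \<Longrightarrow> \<beta> < \<alpha> \<Longrightarrow> x \<in> L \<beta>) \<Longrightarrow> x \<in> L \<alpha>"
begin

abbreviation "v \<equiv> fuzzy_of_levels L"

lemma fuzzy_of_levels_range: "0 \<le> v x" "v x \<le> 1"
proof -
  have "bdd_above (insert 0 {\<alpha>. 0 < \<alpha> \<and> \<alpha> \<le> 1 \<and> x \<in> L \<alpha>})" by (intro bdd_aboveI[of _ 1]) auto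
  thus "0 \<le> v x" unfolding fuzzy_of_levels_def by (intro cSup_upper) auto
  show "v x \<le> 1" unfolding fuzzy_of_levels_def by (rule cSup_least) auto
qed

lemma level_fuzzy_of_levels:
  assumes \<alpha>: "0 < \<alpha>" "\<alpha> \<le> 1"
  shows "level v \<alpha> = L \<alpha>"
proof -
  let ?S = "\<lambda>x. insert 0 {\<alpha>. 0 < \<alpha> \<and> \<alpha> \<le> 1 \<and> x \<in> L \<alpha>}"
  have bdd: "bdd_above (?S x)" for x by (intro bdd_aboveI[of _ 1]) auto
  have "\<alpha> \<le> v x \<longleftrightarrow> x \<in> L \<alpha>" for x
  proof
    assume "x \<in> L \<alpha>"
    thus "\<alpha> \<le> v x" unfolding fuzzy_of_levels_def using \<alpha> bdd by (intro cSup_upper) auto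
  next
    assume \<alpha>v: "\<alpha> \<le> v x"
    show "x \<in> L \<alpha>"
    proof (rule left_closed[OF \<alpha>])
      fix \<beta> :: real assume \<beta>: "0 < \<beta>" "\<beta> < \<alpha>"
      hence "\<beta> < Sup (?S x)" using \<alpha>v unfolding fuzzy_of_levels_def by simp
      then obtain \<gamma> where "\<gamma> \<in> ?S x" "\<beta> < \<gamma>" using less_cSup_iff[OF _ bdd] by blast
      thus "x \<in> L \<beta>" using antimono[of \<beta> \<gamma>] \<beta> by auto
    qed
  qed
  thus ?thesis using \<alpha> by (auto simp: level_pos)
qed

lemma fuzzy_of_levels_Fstar: "v \<in> Fstar"
proof -
  obtain x where "x \<in> L 1" using nonempty by auto
  hence "x \<in> level v 1" using level_fuzzy_of_levels[of 1] by simp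
  hence "v x = 1" using fuzzy_of_levels_range[of x] by (simp add: level_pos)
  moreover have "usc v"
  proof (rule usc_if_closed_superlevels)
    fix \<alpha> :: real assume \<alpha>: "0 < \<alpha>" "\<alpha> \<le> 1"
    have "closed (L \<alpha>)" using compact[of \<alpha>] \<alpha> compact_imp_closed by simp
    thus "closed {x. \<alpha> \<le> v x}" using level_fuzzy_of_levels[OF \<alpha>] \<alpha> by (simp add: level_pos)
  qed (use fuzzy_of_levels_range in auto)
  moreover have "compact (level v 0)"
  proof -
    have "{x. 0 < v x} \<subseteq> L 0"
    proof
      fix x assume "x \<in> {x. 0 < v x}"
      hence x: "0 < v x" "x \<in> level v (v x)" by (simp_all add: level_pos)
      hence "x \<in> L (v x)" using level_fuzzy_of_levels[of "v x"] fuzzy_of_levels_range[of x] by simp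
      thus "x \<in> L 0" using antimono[of 0 "v x"] fuzzy_of_levels_range[of x] by auto
    qed
    moreover have "closed (L 0)" using compact[of 0] compact_imp_closed by simp
    ultimately have "closure {x. 0 < v x} \<subseteq> L 0" by (rule closure_minimal)
    hence "level v 0 = L 0 \<inter> closure {x. 0 < v x}" unfolding level_def by auto
    thus ?thesis using compact[of 0] by (simp add: compact_Int_closed)
  qed
  ultimately show ?thesis unfolding Fstar_def using fuzzy_of_levels_range by blast
qed

end

lemma hausdorff_levels_le_if_d_inf_le:
  fixes u :: "nat \<Rightarrow> 'a::metric_space \<Rightarrow> real"
  assumes u: "\<And>k. u k \<in> Fstar" and N: "\<forall>p\<ge>N. \<forall>q\<ge>N. d_inf (u p) (u q) \<le> e" and \<alpha>: "\<alpha> \<in> {0..1}"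
    and "N \<le> p" "N \<le> q"
  shows "hausdorff (level (u p) \<alpha>) (level (u q) \<alpha>) \<le> e"
  by (rule order_trans[OF hausdorff_level_le_d_inf[OF u u \<alpha>] N[rule_format, OF assms(4,5)]])

lemma Cauchy_hausdorff_levels:
  fixes u :: "nat \<Rightarrow> 'a::metric_space \<Rightarrow> real"
  assumes u: "\<And>k. u k \<in> Fstar" and cauchy: "\<forall>e>0. \<exists>N. \<forall>p\<ge>N. \<forall>q\<ge>N. d_inf (u p) (u q) \<le> e"
    and \<alpha>: "\<alpha> \<in> {0..1}"
  shows "\<forall>e>0. \<exists>N. \<forall>p\<ge>N. \<forall>q\<ge>N. hausdorff (level (u p) \<alpha>) (level (u q) \<alpha>) \<le> e"
proof (intro allI impI)
  fix e :: real assume "0 < e"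
  then obtain N where N: "\<forall>p\<ge>N. \<forall>q\<ge>N. d_inf (u p) (u q) \<le> e" using cauchy by blast
  show "\<exists>N. \<forall>p\<ge>N. \<forall>q\<ge>N. hausdorff (level (u p) \<alpha>) (level (u q) \<alpha>) \<le> e"
    using hausdorff_levels_le_if_d_inf_le[of u, OF u N \<alpha>] by blast
qed

lemma level_family_Kuratowski_liminf_levels:
  fixes u :: "nat \<Rightarrow> 'a::complete_space \<Rightarrow> real"
  assumes u: "\<And>k. u k \<in> Fstar" and cauchy: "\<forall>e>0. \<exists>N. \<forall>p\<ge>N. \<forall>q\<ge>N. d_inf (u p) (u q) \<le> e"
  shows "level_family (\<lambda>\<alpha>. Kuratowski_liminf (\<lambda>k. level (u k) \<alpha>))"
proof
  let ?L = "\<lambda>\<alpha>. Kuratowski_liminf (\<lambda>k. level (u k) \<alpha>)"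
  note lev = level_compact_nonempty[OF u]
  note cauchy_lev = Cauchy_hausdorff_levels[OF u cauchy]
  show "compact (?L \<alpha>)" if "0 \<le> \<alpha>" "\<alpha> \<le> 1" for \<alpha>
    using that by (intro compact_Kuratowski_liminf lev cauchy_lev) auto
  show "?L 1 \<noteq> {}" by (intro Kuratowski_liminf_nonempty lev cauchy_lev) auto
  show "?L \<beta> \<subseteq> ?L \<alpha>" if "0 \<le> \<alpha>" "\<alpha> \<le> \<beta>" "\<beta> \<le> 1" for \<alpha> \<beta>
    using that by (intro Kuratowski_liminf_mono level_antimono lev) auto
  show "x \<in> ?L \<alpha>" if \<alpha>: "0 < \<alpha>" "\<alpha> \<le> 1" and lower: "\<And>\<beta>. 0 < \<beta> \<Longrightarrow> \<beta> < \<alpha> \<Longrightarrow> x \<in> ?L \<beta>"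
    for x \<alpha>
    unfolding Kuratowski_liminf_def mem_Collect_eq
  proof (rule tendstoI)
    fix \<epsilon> :: real assume \<epsilon>: "0 < \<epsilon>"
    obtain N where N: "\<forall>p\<ge>N. \<forall>q\<ge>N. d_inf (u p) (u q) \<le> \<epsilon> / 2" using cauchy \<epsilon> half_gt_zero by blast
    have le: "infdist x (level (u k) \<alpha>) \<le> \<epsilon> / 2" if k: "N \<le> k" for k
    proof (rule infdist_level_le_if_lower_levels[OF u \<alpha>])
      fix \<beta> :: real assume \<beta>: "0 < \<beta>" "\<beta> < \<alpha>"
      hence \<beta>': "\<beta> \<in> {0..1}" using \<alpha> by simp
      show "infdist x (level (u k) \<beta>) \<le> \<epsilon> / 2"
        by (rule infdist_le_if_in_Kuratowski_liminf[OF lev[OF \<beta>'] hausdorff_levels_le_if_d_inf_le[OF u N \<beta>']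
              lower[OF \<beta>] k])
    qed
    have "dist (infdist x (level (u k) \<alpha>)) 0 < \<epsilon>" if "N \<le> k" for k
      using le[OF that] \<epsilon> infdist_nonneg[of x "level (u k) \<alpha>"] by (simp add: dist_real_def)
    thus "eventually (\<lambda>k. dist (infdist x (level (u k) \<alpha>)) 0 < \<epsilon>) sequentially"
      unfolding eventually_sequentially by blast
  qed
qed

theorem Fstar_complete:
  fixes u :: "nat \<Rightarrow> 'a::complete_space \<Rightarrow> real"
  assumes u: "\<And>k. u k \<in> Fstar" and cauchy: "\<forall>e>0. \<exists>N. \<forall>p\<ge>N. \<forall>q\<ge>N. d_inf (u p) (u q) \<le> e"
  shows "\<exists>v\<in>Fstar. (\<lambda>k. d_inf (u k) v) \<longlonglongrightarrow> 0"
proof -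
  let ?L = "\<lambda>\<alpha>. Kuratowski_liminf (\<lambda>k. level (u k) \<alpha>)"
  interpret level_family ?L using level_family_Kuratowski_liminf_levels[OF u cauchy] .
  have "(\<lambda>k. d_inf (u k) v) \<longlonglongrightarrow> 0"
  proof (rule tendstoI)
    fix \<epsilon> :: real assume \<epsilon>: "0 < \<epsilon>"
    obtain N where N: "\<forall>p\<ge>N. \<forall>q\<ge>N. d_inf (u p) (u q) \<le> \<epsilon> / 4"
      using cauchy \<epsilon> by (meson divide_pos_pos zero_less_numeral)
    have le: "d_inf (u k) v \<le> 2 * (\<epsilon> / 4)" if k: "N \<le> k" for k
    proof (rule d_inf_le_if_positive_levels[OF u fuzzy_of_levels_Fstar])
      fix \<alpha> :: real assume \<alpha>: "0 < \<alpha>" "\<alpha> \<le> 1"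
      hence \<alpha>': "\<alpha> \<in> {0..1}" by simp
      show "hausdorff (level (u k) \<alpha>) (level v \<alpha>) \<le> 2 * (\<epsilon> / 4)"
        unfolding level_fuzzy_of_levels[OF \<alpha>]
        by (rule hausdorff_le_Kuratowski_liminf[OF level_compact_nonempty[OF u \<alpha>']
              Cauchy_hausdorff_levels[OF u cauchy \<alpha>'] hausdorff_levels_le_if_d_inf_le[OF u N \<alpha>']])
          (use \<epsilon> k in auto)
    qed
    have "dist (d_inf (u k) v) 0 < \<epsilon>" if "N \<le> k" for k
      using le[OF that] \<epsilon> d_inf_nonneg[OF u fuzzy_of_levels_Fstar, of k] by (simp add: dist_real_def)
    thus "eventually (\<lambda>k. dist (d_inf (u k) v) 0 < \<epsilon>) sequentially"
      unfolding eventually_sequentially by blast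
  qed
  thus ?thesis using fuzzy_of_levels_Fstar by blast
qed

lemma componentwise_convergent_subseq:
  fixes z :: "nat \<Rightarrow> 'a::metric_space list"
  assumes "\<forall>k. length (z k) = m" "\<forall>k i. i < m \<longrightarrow> z k ! i \<in> K i" "\<forall>i<m. compact (K i)"
  shows "\<exists>r L. strict_mono r \<and> length L = m \<and> (\<forall>i<m. L ! i \<in> K i) \<and>
           (\<forall>i<m. (\<lambda>k. z (r k) ! i) \<longlonglongrightarrow> L ! i)"
  using assms
proof (induction m arbitrary: z K)
  case 0
  show ?case by (rule exI[of _ id], rule exI[of _ "[]"]) (auto simp: strict_mono_def)
next
  case (Suc m)
  let ?t = "\<lambda>k. tl (z k)"
  have "\<forall>k. length (?t k) = m" "\<forall>k i. i < m \<longrightarrow> ?t k ! i \<in> K (Suc i)" "\<forall>i<m. compact (K (Suc i))"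
    using Suc.prems by (simp_all add: nth_tl)
  then obtain r1 L1 where r1: "strict_mono r1" "length L1 = m" "\<forall>i<m. L1 ! i \<in> K (Suc i)"
     "\<forall>i<m. (\<lambda>k. ?t (r1 k) ! i) \<longlonglongrightarrow> L1 ! i"
    using Suc.IH[of ?t "\<lambda>i. K (Suc i)"] by blast
  have "seq_compact (K 0)" using Suc.prems(3) compact_imp_seq_compact by auto
  moreover have "\<forall>k. z (r1 k) ! 0 \<in> K 0" using Suc.prems(2) by simp
  ultimately obtain l r2 where r2: "l \<in> K 0" "strict_mono r2" "((\<lambda>k. z (r1 k) ! 0) \<circ> r2) \<longlonglongrightarrow> l"
    by (rule seq_compactE)
  show ?case
  proof (intro exI conjI allI impI)
    show "strict_mono (r1 \<circ> r2)" using r1(1) r2(2) by (rule strict_mono_o)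
    show "length (l # L1) = Suc m" using r1(2) by simp
    fix i assume i: "i < Suc m"
    show "(l # L1) ! i \<in> K i" using i r1(3) r2(1) by (cases i) auto
    show "(\<lambda>k. z ((r1 \<circ> r2) k) ! i) \<longlonglongrightarrow> (l # L1) ! i"
    proof (cases i)
      case 0 thus ?thesis using r2(3) by (simp add: o_def)
    next
      case (Suc i')
      hence i': "i' < m" using i by simp
      have "((\<lambda>k. ?t (r1 k) ! i') \<circ> r2) \<longlonglongrightarrow> L1 ! i'"
        using r1(4) i' r2(2) LIMSEQ_subseq_LIMSEQ by blast
      moreover have "?t (r1 (r2 k)) ! i' = z (r1 (r2 k)) ! i" for k
        using Suc Suc.prems(1) i' by (simp add: nth_tl)
      ultimately show ?thesis using Suc by (simp add: o_def)
    qed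
  qed
qed

lemma cont_m_imp_tendsto:
  fixes f :: "'a::metric_space list \<Rightarrow> 'a"
  assumes "m \<ge> 1" "cont_m m f" "\<forall>k. z k \<in> Xpow m" "L \<in> Xpow m"
    "\<forall>i<m. (\<lambda>k. z k ! i) \<longlonglongrightarrow> L ! i"
  shows "(\<lambda>k. f (z k)) \<longlonglongrightarrow> f L"
proof (rule tendstoI)
  fix e :: real assume e: "e > 0"
  obtain d where d: "d > 0" "\<forall>y\<in>Xpow m. dmax m L y < d \<longrightarrow> dist (f y) (f L) < e"
    using assms(2,4) e unfolding cont_m_def by blast
  have "\<forall>i\<in>{..<m}. eventually (\<lambda>k. dist (z k ! i) (L ! i) < d) sequentially"
    using assms(5) d(1) tendstoD by blast
  hence "eventually (\<lambda>k. \<forall>i\<in>{..<m}. dist (z k ! i) (L ! i) < d) sequentially"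
    by (intro eventually_ball_finite) auto
  thus "eventually (\<lambda>k. dist (f (z k)) (f L) < e) sequentially"
  proof eventually_elim
    case (elim k)
    have "dmax m L (z k) < d" unfolding dmax_def using assms(1) elim
      by (subst Max_less_iff) (auto simp: dist_commute lessThan_empty_iff)
    thus ?case using d(2) assms(3) by blast
  qed
qed

lemma dmax_nonneg: "m \<ge> 1 \<Longrightarrow> 0 \<le> dmax m x y"
  unfolding dmax_def by (rule order_trans[OF zero_le_dist Max_ge[of _ "dist (x ! 0) (y ! 0)"]]) auto

text \<open>For \<open>\<beta> > 0\<close> this is the \<open>\<beta>\<close>-level of \<open>fprod m us\<close>.\<close>

definition cut_product :: "nat \<Rightarrow> ('a::topological_space \<Rightarrow> real) list \<Rightarrow> real \<Rightarrow> 'a list set" where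
  "cut_product m us \<beta> = {z \<in> Xpow m. \<forall>i<m. z ! i \<in> level (us ! i) \<beta>}"

lemma cut_product_pos: "\<beta> \<noteq> 0 \<Longrightarrow> cut_product m us \<beta> = {z \<in> Xpow m. \<forall>i<m. \<beta> \<le> (us ! i) (z ! i)}"
  unfolding cut_product_def by (simp add: level_pos)

lemma cut_product_antimono: "0 \<le> \<beta> \<Longrightarrow> \<beta> \<le> \<beta>' \<Longrightarrow> cut_product m us \<beta>' \<subseteq> cut_product m us \<beta>"
  unfolding cut_product_def using level_antimono by blast

lemma cut_product_nonempty:
  assumes us: "\<forall>i<m. us ! i \<in> Fstar" and \<beta>: "\<beta> \<le> 1"
  shows "cut_product m us \<beta> \<noteq> {}"
proof -
  define g where "g i = (SOME y. y \<in> level (us ! i) \<beta>)" for i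
  have "g i \<in> level (us ! i) \<beta>" if "i < m" for i
    unfolding g_def using level_nonempty[OF us[rule_format, OF that] \<beta>] by (simp add: some_in_eq)
  hence "map g [0..<m] \<in> cut_product m us \<beta>" unfolding cut_product_def Xpow_def by auto
  thus ?thesis by blast
qed

lemma compact_image_cut_product:
  fixes f :: "'a::metric_space list \<Rightarrow> 'a"
  assumes "m \<ge> 1" "cont_m m f" "\<forall>i<m. us ! i \<in> Fstar" "0 \<le> \<beta>"
  shows "compact (f ` cut_product m us \<beta>)"
  unfolding compact_eq_seq_compact_metric seq_compact_def
proof (intro allI impI)
  fix y :: "nat \<Rightarrow> 'a" assume "\<forall>k. y k \<in> f ` cut_product m us \<beta>"
  hence "\<forall>k. \<exists>w. w \<in> cut_product m us \<beta> \<and> y k = f w" by blast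
  then obtain z :: "nat \<Rightarrow> 'a list" where z: "\<forall>k. z k \<in> cut_product m us \<beta> \<and> y k = f (z k)"
    by metis
  have "\<forall>k. length (z k) = m" "\<forall>k i. i < m \<longrightarrow> z k ! i \<in> level (us ! i) \<beta>"
    using z unfolding cut_product_def Xpow_def by auto
  moreover have "\<forall>i<m. compact (level (us ! i) \<beta>)" using assms(3,4) compact_level by blast
  ultimately obtain r L where rL: "strict_mono r" "length L = m" "\<forall>i<m. L ! i \<in> level (us ! i) \<beta>"
      "\<forall>i<m. (\<lambda>k. z (r k) ! i) \<longlonglongrightarrow> L ! i"
    using componentwise_convergent_subseq[of z m "\<lambda>i. level (us ! i) \<beta>"] by blast
  have L: "L \<in> cut_product m us \<beta>" using rL unfolding cut_product_def Xpow_def by auto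
  have "(\<lambda>k. f (z (r k))) \<longlonglongrightarrow> f L"
    by (rule cont_m_imp_tendsto[OF assms(1,2)]) (use z rL(2,4) in \<open>auto simp: cut_product_def Xpow_def\<close>)
  hence "(y \<circ> r) \<longlonglongrightarrow> f L" using z by (simp add: o_def)
  thus "\<exists>l\<in>f ` cut_product m us \<beta>. \<exists>r. strict_mono r \<and> (y \<circ> r) \<longlonglongrightarrow> l" using L rL(1) by blast
qed

lemma fprod_ge_iff:
  assumes "m \<ge> 1"
  shows "\<beta> \<le> fprod m us z \<longleftrightarrow> (\<forall>i<m. \<beta> \<le> (us ! i) (z ! i))"
  unfolding fprod_def using assms by (subst Min_ge_iff) (auto simp: lessThan_empty_iff)

lemma fprod_range:
  assumes "m \<ge> 1" "\<forall>i<m. us ! i \<in> Fstar"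
  shows "0 \<le> fprod m us z" "fprod m us z \<le> 1"
proof -
  show "0 \<le> fprod m us z" using fprod_ge_iff[OF assms(1), of 0] FstarD(1) assms(2) by blast
  have "fprod m us z \<le> (us ! 0) (z ! 0)" unfolding fprod_def using assms by (intro Min_le) auto
  thus "fprod m us z \<le> 1" using FstarD(2)[of "us ! 0" "z ! 0"] assms by force
qed

lemma zext_fprod_range:
  assumes "m \<ge> 1" "\<forall>i<m. us ! i \<in> Fstar"
  shows "0 \<le> zext (Xpow m) f (fprod m us) x" "zext (Xpow m) f (fprod m us) x \<le> 1"
proof -
  let ?S = "{z \<in> Xpow m. f z = x}"
  have "0 \<le> (SUP z\<in>?S. fprod m us z) \<and> (SUP z\<in>?S. fprod m us z) \<le> 1" if ne: "?S \<noteq> {}"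
  proof
    obtain z where z: "z \<in> ?S" using ne by blast
    have bdd: "bdd_above (fprod m us ` ?S)" using fprod_range[OF assms] by (intro bdd_aboveI2) auto
    show "0 \<le> (SUP z\<in>?S. fprod m us z)"
      using cSUP_upper[OF z bdd] fprod_range(1)[OF assms, of z] by linarith
    show "(SUP z\<in>?S. fprod m us z) \<le> 1" using ne fprod_range[OF assms] by (intro cSUP_least) auto
  qed
  thus "0 \<le> zext (Xpow m) f (fprod m us) x" "zext (Xpow m) f (fprod m us) x \<le> 1"
    unfolding zext_def by auto
qed

text \<open>A point approximated from below on one fibre of \<open>f\<close> is attained there: this is where
  compactness of the levels, upper semicontinuity and continuity of \<open>f\<close> enter.\<close>

lemma in_image_cut_product_if_approx:
  fixes f :: "'a::metric_space list \<Rightarrow> 'a"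
  assumes m: "m \<ge> 1" and us: "\<forall>i<m. us ! i \<in> Fstar" and f: "cont_m m f"
    and z: "\<And>k. z k \<in> Xpow m" "\<And>k. f (z k) = x" "\<And>k i. i < m \<Longrightarrow> t k \<le> (us ! i) (z k ! i)"
    and t: "\<And>k. 0 < t k" "t \<longlonglongrightarrow> \<beta>"
    and \<beta>: "0 < \<beta>"
  shows "x \<in> f ` cut_product m us \<beta>"
proof -
  have "z k ! i \<in> level (us ! i) 0" if "i < m" for k i
  proof -
    have "z k ! i \<in> {y. 0 < (us ! i) y}" using t(1)[of k] z(3)[OF that, of k] by simp
    thus ?thesis using closure_subset[of "{y. 0 < (us ! i) y}"] unfolding level_def by auto
  qed
  moreover have "\<forall>k. length (z k) = m" using z(1) unfolding Xpow_def by auto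
  moreover have "\<forall>i<m. compact (level (us ! i) 0)" using FstarD(5) us by blast
  ultimately obtain r L where rL: "strict_mono r" "length L = m" "\<forall>i<m. (\<lambda>k. z (r k) ! i) \<longlonglongrightarrow> L ! i"
    using componentwise_convergent_subseq[of z m "\<lambda>i. level (us ! i) 0"] by blast
  have LX: "L \<in> Xpow m" using rL(2) by (simp add: Xpow_def)
  have "(\<lambda>k. f (z (r k))) \<longlonglongrightarrow> f L" by (rule cont_m_imp_tendsto[OF m f]) (use z(1) LX rL(3) in auto)
  hence "f L = x" using z(2) by (simp add: LIMSEQ_const_iff)
  moreover have "\<beta> \<le> (us ! i) (L ! i)" if i: "i < m" for i
    using usc_tendsto_le[OF FstarD(4) rL(3)[rule_format, OF i] LIMSEQ_subseq_LIMSEQ[OF t(2) rL(1)]] us i z(3)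
    by (simp add: o_def)
  ultimately show ?thesis using LX \<beta> by (auto simp: cut_product_pos)
qed

lemma zext_fprod_ge_iff:
  fixes f :: "'a::metric_space list \<Rightarrow> 'a"
  assumes m: "m \<ge> 1" and us: "\<forall>i<m. us ! i \<in> Fstar" and f: "cont_m m f" and \<beta>: "0 < \<beta>"
  shows "\<beta> \<le> zext (Xpow m) f (fprod m us) x \<longleftrightarrow> x \<in> f ` cut_product m us \<beta>"
proof
  let ?S = "{z \<in> Xpow m. f z = x}"
  have bdd: "bdd_above (fprod m us ` ?S)" using fprod_range[OF m us] by (intro bdd_aboveI2) auto
  {
    assume "x \<in> f ` cut_product m us \<beta>"
    then obtain z where z: "z \<in> cut_product m us \<beta>" "f z = x" by blast
    hence zS: "z \<in> ?S" unfolding cut_product_def by auto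
    have "\<beta> \<le> fprod m us z" using z(1) \<beta> by (simp add: cut_product_pos fprod_ge_iff[OF m])
    also have "\<dots> \<le> (SUP z\<in>?S. fprod m us z)" using bdd zS by (rule cSUP_upper2) simp
    finally show "\<beta> \<le> zext (Xpow m) f (fprod m us) x" using zS unfolding zext_def by auto
  }
  assume ge: "\<beta> \<le> zext (Xpow m) f (fprod m us) x"
  hence ne: "?S \<noteq> {}" using \<beta> unfolding zext_def by (auto split: if_splits)
  hence sup: "\<beta> \<le> (SUP z\<in>?S. fprod m us z)" using ge unfolding zext_def by auto
  obtain t where t: "\<And>k. 0 < t k" "\<And>k. t k < \<beta>" "t \<longlonglongrightarrow> \<beta>"
    using tendsto_from_below[OF \<beta>] by blast
  have "\<exists>z. z \<in> ?S \<and> t k < fprod m us z" for k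
    using less_cSUP_iff[OF ne bdd, of "t k"] sup t(2)[of k] by auto
  then obtain z where z: "\<And>k. z k \<in> ?S" "\<And>k. t k < fprod m us (z k)" by metis
  show "x \<in> f ` cut_product m us \<beta>"
  proof (rule in_image_cut_product_if_approx[OF m us f _ _ _ t(1,3) \<beta>])
    show "z k \<in> Xpow m" "f (z k) = x" for k using z(1) by auto
    show "t k \<le> (us ! i) (z k ! i)" if "i < m" for k i
      using z(2)[of k] fprod_ge_iff[OF m, of "t k"] that by (auto intro: less_imp_le)
  qed
qed

section \<open>The generalized inverse of a level transformation\<close>

definition pseudo_inverse :: "(real \<Rightarrow> real) \<Rightarrow> real \<Rightarrow> real" where
  "pseudo_inverse r \<alpha> = Inf {t \<in> {0..1}. \<alpha> \<le> r t}"

text \<open>Right continuity of \<open>r\<close> is what makes the infimum attained.\<close>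

lemma pseudo_inverse_characterization:
  assumes mono: "mono_on {0..1} r" and rc: "\<And>t. t \<in> {0..<1} \<Longrightarrow> continuous (at t within {t..1}) r"
    and r0: "r 0 = 0" and \<alpha>: "0 < \<alpha>" "\<alpha> \<le> r 1"
  shows "0 < pseudo_inverse r \<alpha>" "pseudo_inverse r \<alpha> \<le> 1"
    and "\<And>t. t \<in> {0..1} \<Longrightarrow> \<alpha> \<le> r t \<longleftrightarrow> pseudo_inverse r \<alpha> \<le> t"
proof -
  let ?T = "{t \<in> {0..1}. \<alpha> \<le> r t}"
  let ?B = "pseudo_inverse r \<alpha>"
  have T1: "1 \<in> ?T" using \<alpha>(2) by simp
  have bdd: "bdd_below ?T" by (intro bdd_belowI[of _ 0]) auto
  show B1: "?B \<le> 1" unfolding pseudo_inverse_def using T1 bdd by (rule cInf_lower)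
  have B0: "0 \<le> ?B" unfolding pseudo_inverse_def using T1 by (intro cInf_greatest) auto
  have above: "\<alpha> \<le> r t" if t: "?B < t" "t \<le> 1" for t
  proof -
    obtain t' where t': "t' \<in> ?T" "t' < t"
      using t(1) cInf_less_iff[of ?T t] T1 bdd unfolding pseudo_inverse_def by blast
    thus ?thesis using mono_onD[OF mono, of t' t] t(2) by auto
  qed
  have at_B: "\<alpha> \<le> r ?B"
  proof (cases "?B = 1")
    case False
    hence lt: "?B < 1" using B1 by simp
    have "(r \<longlongrightarrow> r ?B) (at_right ?B)"
      using rc[of ?B] lt B0 unfolding continuous_within at_within_Icc_at_right[OF lt] by simp
    moreover have "eventually (\<lambda>t. \<alpha> \<le> r t) (at_right ?B)"
      unfolding eventually_at_right_field using lt above by (intro exI[of _ 1]) auto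
    ultimately show ?thesis by (intro tendsto_lowerbound) auto
  qed (use \<alpha> in simp)
  show iff: "\<alpha> \<le> r t \<longleftrightarrow> ?B \<le> t" if t: "t \<in> {0..1}" for t
  proof
    assume "\<alpha> \<le> r t" thus "?B \<le> t" unfolding pseudo_inverse_def using t bdd by (intro cInf_lower) auto
  next
    assume "?B \<le> t"
    thus "\<alpha> \<le> r t" using at_B mono_onD[OF mono, of ?B t] t B0 B1 by auto
  qed
  show "0 < ?B" using iff[of 0] B0 r0 \<alpha>(1) by fastforce
qed

lemma admissibleD:
  assumes "admissible n \<rho>" "j < n"
  shows "\<And>t. t \<in> {0..1} \<Longrightarrow> 0 \<le> \<rho> j t" "\<And>t. t \<in> {0..1} \<Longrightarrow> \<rho> j t \<le> 1" "mono_on {0..1} (\<rho> j)"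
    "\<And>t. t \<in> {0..<1} \<Longrightarrow> continuous (at t within {t..1}) (\<rho> j)" "\<rho> j 0 = 0"
  using assms unfolding admissible_def by auto

lemma cut_product_close_tuple:
  assumes m: "m \<ge> 1" and us: "\<forall>i<m. us ! i \<in> Fstar" and vs: "\<forall>i<m. vs ! i \<in> Fstar"
    and D: "\<And>i. i < m \<Longrightarrow> d_inf (us ! i) (vs ! i) \<le> D"
    and \<beta>: "\<beta> \<in> {0..1}" and z: "z \<in> cut_product m us \<beta>"
  shows "\<exists>w\<in>cut_product m vs \<beta>. dmax m z w \<le> D"
proof -
  have "\<exists>y. y \<in> level (vs ! i) \<beta> \<and> dist (z ! i) y \<le> D" if i: "i < m" for i
  proof -
    note U = level_compact_nonempty[OF us[rule_format, OF i] \<beta>]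
    note V = level_compact_nonempty[OF vs[rule_format, OF i] \<beta>]
    obtain y where y: "y \<in> level (vs ! i) \<beta>" "infdist (z ! i) (level (vs ! i) \<beta>) = dist (z ! i) y"
      using compact_infdist_attained[OF V] by blast
    have "z ! i \<in> level (us ! i) \<beta>" using z i unfolding cut_product_def by auto
    hence "infdist (z ! i) (level (vs ! i) \<beta>) \<le> hausdorff (level (us ! i) \<beta>) (level (vs ! i) \<beta>)"
      by (rule infdist_le_hausdorff[OF U V])
    also have "\<dots> \<le> d_inf (us ! i) (vs ! i)"
      by (rule hausdorff_level_le_d_inf[OF us[rule_format, OF i] vs[rule_format, OF i] \<beta>])
    also have "\<dots> \<le> D" using D[OF i] .
    finally show ?thesis using y by auto
  qed
  then obtain g where g: "\<forall>i<m. g i \<in> level (vs ! i) \<beta> \<and> dist (z ! i) (g i) \<le> D" by metis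
  have "map g [0..<m] \<in> cut_product m vs \<beta>" using g unfolding cut_product_def Xpow_def by auto
  moreover have "dmax m z (map g [0..<m]) \<le> D" unfolding dmax_def using m g
    by (subst Max_le_iff) (auto simp: lessThan_empty_iff)
  ultimately show ?thesis by blast
qed

locale gifzs =
  fixes m n :: nat and \<phi> :: "nat \<Rightarrow> 'a::metric_space list \<Rightarrow> 'a" and \<rho> :: "nat \<Rightarrow> real \<Rightarrow> real"
  assumes m: "m \<ge> 1" and cont: "\<And>j. j < n \<Longrightarrow> cont_m m (\<phi> j)" and adm: "admissible n \<rho>"
begin

lemma n_pos: "0 < n"
  using adm unfolding admissible_def by auto

lemma rho_pseudo_inverse:
  assumes "j < n" "0 < \<alpha>" "\<alpha> \<le> \<rho> j 1"
  shows "0 < pseudo_inverse (\<rho> j) \<alpha>" "pseudo_inverse (\<rho> j) \<alpha> \<le> 1"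
    and "\<And>t. t \<in> {0..1} \<Longrightarrow> \<alpha> \<le> \<rho> j t \<longleftrightarrow> pseudo_inverse (\<rho> j) \<alpha> \<le> t"
  using pseudo_inverse_characterization[OF admissibleD(3,4,5)[OF adm assms(1)] assms(2,3)] by auto

lemma ZS_ge_iff:
  assumes us: "\<forall>i<m. us ! i \<in> Fstar" and \<alpha>: "0 < \<alpha>"
  shows "\<alpha> \<le> ZS m n \<phi> \<rho> us x
    \<longleftrightarrow> (\<exists>j<n. \<alpha> \<le> \<rho> j 1 \<and> x \<in> \<phi> j ` cut_product m us (pseudo_inverse (\<rho> j) \<alpha>))"
proof -
  have one: "\<alpha> \<le> \<rho> j (zext (Xpow m) (\<phi> j) (fprod m us) x)
      \<longleftrightarrow> \<alpha> \<le> \<rho> j 1 \<and> x \<in> \<phi> j ` cut_product m us (pseudo_inverse (\<rho> j) \<alpha>)" if j: "j < n" for j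
  proof -
    let ?s = "zext (Xpow m) (\<phi> j) (fprod m us) x"
    have s: "?s \<in> {0..1}" using zext_fprod_range[OF m us, of "\<phi> j" x] by simp
    have "\<alpha> \<le> \<rho> j 1" if "\<alpha> \<le> \<rho> j ?s"
      using that mono_onD[OF admissibleD(3)[OF adm j] s, of 1] s by simp
    thus ?thesis using rho_pseudo_inverse[OF j \<alpha>] s zext_fprod_ge_iff[OF m us cont[OF j]] by blast
  qed
  have "\<alpha> \<le> ZS m n \<phi> \<rho> us x \<longleftrightarrow> (\<exists>j<n. \<alpha> \<le> \<rho> j (zext (Xpow m) (\<phi> j) (fprod m us) x))"
    unfolding ZS_def using n_pos by (subst Max_ge_iff) auto
  thus ?thesis using one by auto
qed

lemma ZS_range:
  assumes us: "\<forall>i<m. us ! i \<in> Fstar"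
  shows "0 \<le> ZS m n \<phi> \<rho> us x" "ZS m n \<phi> \<rho> us x \<le> 1"
proof -
  have r: "\<rho> j (zext (Xpow m) (\<phi> j) (fprod m us) x) \<in> {0..1}" if "j < n" for j
    using admissibleD(1,2)[OF adm that] zext_fprod_range[OF m us, of "\<phi> j" x] by simp
  show "0 \<le> ZS m n \<phi> \<rho> us x" unfolding ZS_def using r n_pos by (subst Max_ge_iff) auto
  show "ZS m n \<phi> \<rho> us x \<le> 1" unfolding ZS_def using r n_pos by (subst Max_le_iff) auto
qed

lemma level_ZS:
  assumes us: "\<forall>i<m. us ! i \<in> Fstar" and \<alpha>: "0 < \<alpha>"
  shows "level (ZS m n \<phi> \<rho> us) \<alpha>
    = (\<Union>j\<in>{j. j < n \<and> \<alpha> \<le> \<rho> j 1}. \<phi> j ` cut_product m us (pseudo_inverse (\<rho> j) \<alpha>))"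
  using ZS_ge_iff[OF us \<alpha>] \<alpha> by (auto simp: level_pos)

lemma ZS_Fstar:
  assumes us: "\<forall>i<m. us ! i \<in> Fstar"
  shows "ZS m n \<phi> \<rho> us \<in> Fstar"
proof -
  let ?w = "ZS m n \<phi> \<rho> us"
  have range: "0 \<le> ?w x" "?w x \<le> 1" for x using ZS_range[OF us] by auto
  obtain j where j: "j < n" "\<rho> j 1 = 1" using adm unfolding admissible_def by blast
  obtain z where "z \<in> cut_product m us (pseudo_inverse (\<rho> j) 1)"
    using cut_product_nonempty[OF us rho_pseudo_inverse(2)[of j 1]] j by auto
  hence "1 \<le> ?w (\<phi> j z)" using ZS_ge_iff[OF us, of 1] j by auto
  hence normal: "\<exists>x. ?w x = 1" using range by (meson order_antisym)
  have compact_levels: "compact (level ?w \<alpha>)" if "0 < \<alpha>" for \<alpha>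
    unfolding level_ZS[OF us that]
    using compact_image_cut_product[OF m cont us] rho_pseudo_inverse(1)[OF _ that] 
    by (intro compact_UN) (auto intro: less_imp_le)
  have usc: "usc ?w"
    by (rule usc_if_closed_superlevels)
      (use range compact_levels compact_imp_closed in \<open>auto simp: level_pos\<close>)
  let ?K = "\<Union>j\<in>{..<n}. \<phi> j ` cut_product m us 0"
  have K: "compact ?K" using compact_image_cut_product[OF m cont us] by (intro compact_UN) auto
  have "{x. 0 < ?w x} \<subseteq> ?K"
  proof
    fix x assume "x \<in> {x. 0 < ?w x}"
    hence x: "0 < ?w x" by simp
    then obtain j where j: "j < n" "?w x \<le> \<rho> j 1"
      and "x \<in> \<phi> j ` cut_product m us (pseudo_inverse (\<rho> j) (?w x))"
      using ZS_ge_iff[OF us x, of x] by auto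
    moreover have "cut_product m us (pseudo_inverse (\<rho> j) (?w x)) \<subseteq> cut_product m us 0"
      using rho_pseudo_inverse(1)[OF j(1) x j(2)] by (intro cut_product_antimono) auto
    ultimately show "x \<in> ?K" by blast
  qed
  hence "closure {x. 0 < ?w x} \<subseteq> ?K" using closure_minimal compact_imp_closed[OF K] by blast
  hence "level ?w 0 = ?K \<inter> closure {x. 0 < ?w x}" unfolding level_def by auto
  hence "compact (level ?w 0)" using K by (simp add: compact_Int_closed)
  thus ?thesis using range normal usc unfolding Fstar_def by blast
qed

text \<open>The level sets of \<open>ZS\<close> are unions of images of products of levels, so a comparison
  function \<open>\<Psi>\<close> for all \<open>\<phi> j\<close> passes from tuples to the Hausdorff distance of levels.\<close>

lemma infdist_level_ZS_le:
  assumes us: "\<forall>i<m. us ! i \<in> Fstar" and vs: "\<forall>i<m. vs ! i \<in> Fstar"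
    and D: "\<And>i. i < m \<Longrightarrow> d_inf (us ! i) (vs ! i) \<le> D"
    and \<Psi>: "mono_on {0..} \<Psi>"
    and contr: "\<And>j x y. j < n \<Longrightarrow> x \<in> Xpow m \<Longrightarrow> y \<in> Xpow m \<Longrightarrow> dist (\<phi> j x) (\<phi> j y) \<le> \<Psi> (dmax m x y)"
    and \<alpha>: "0 < \<alpha>" and p: "p \<in> level (ZS m n \<phi> \<rho> us) \<alpha>"
  shows "infdist p (level (ZS m n \<phi> \<rho> vs) \<alpha>) \<le> \<Psi> D"
proof -
  obtain j z where j: "j < n" "\<alpha> \<le> \<rho> j 1" and z: "z \<in> cut_product m us (pseudo_inverse (\<rho> j) \<alpha>)"
    and pz: "p = \<phi> j z"
    using p unfolding level_ZS[OF us \<alpha>] by blast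
  have "pseudo_inverse (\<rho> j) \<alpha> \<in> {0..1}" using rho_pseudo_inverse(1,2)[OF j(1) \<alpha> j(2)] by simp
  then obtain w where w: "w \<in> cut_product m vs (pseudo_inverse (\<rho> j) \<alpha>)" "dmax m z w \<le> D"
    using cut_product_close_tuple[OF m us vs D _ z] by blast
  have "\<phi> j w \<in> level (ZS m n \<phi> \<rho> vs) \<alpha>" unfolding level_ZS[OF vs \<alpha>] using j w(1) by blast
  moreover have "dist p (\<phi> j w) \<le> \<Psi> D"
  proof -
    have "z \<in> Xpow m" "w \<in> Xpow m" using z w(1) unfolding cut_product_def by auto
    hence "dist p (\<phi> j w) \<le> \<Psi> (dmax m z w)" using contr[OF j(1)] pz by blast
    also have "\<dots> \<le> \<Psi> D" using w(2) dmax_nonneg[OF m, of z w] by (intro mono_onD[OF \<Psi>]) auto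
    finally show ?thesis .
  qed
  ultimately show ?thesis by (rule infdist_le2)
qed

lemma d_inf_ZS_le:
  assumes us: "\<forall>i<m. us ! i \<in> Fstar" and vs: "\<forall>i<m. vs ! i \<in> Fstar"
    and D: "\<And>i. i < m \<Longrightarrow> d_inf (us ! i) (vs ! i) \<le> D"
    and \<Psi>: "mono_on {0..} \<Psi>"
    and contr: "\<And>j x y. j < n \<Longrightarrow> x \<in> Xpow m \<Longrightarrow> y \<in> Xpow m \<Longrightarrow> dist (\<phi> j x) (\<phi> j y) \<le> \<Psi> (dmax m x y)"
  shows "d_inf (ZS m n \<phi> \<rho> us) (ZS m n \<phi> \<rho> vs) \<le> \<Psi> D"
proof (rule d_inf_le_if_positive_levels[OF ZS_Fstar[OF us] ZS_Fstar[OF vs]])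
  fix \<alpha> :: real assume \<alpha>: "0 < \<alpha>" "\<alpha> \<le> 1"
  have D': "d_inf (vs ! i) (us ! i) \<le> D" if "i < m" for i using D[OF that] by (simp add: d_inf_commute)
  have "\<alpha> \<in> {0..1}" using \<alpha> by simp
  thus "hausdorff (level (ZS m n \<phi> \<rho> us) \<alpha>) (level (ZS m n \<phi> \<rho> vs) \<alpha>) \<le> \<Psi> D"
    using hausdorff_le_iff[OF level_compact_nonempty[OF ZS_Fstar[OF us]] level_compact_nonempty[OF ZS_Fstar[OF vs]]]
      infdist_level_ZS_le[OF us vs D \<Psi> contr \<alpha>(1)] infdist_level_ZS_le[OF vs us D' \<Psi> contr \<alpha>(1)]
    by blast
qed

end

section \<open>Comparison functions\<close>

definition comparison_function :: "(real \<Rightarrow> real) \<Rightarrow> bool" where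
  "comparison_function \<Psi> \<longleftrightarrow>
     mono_on {0..} \<Psi> \<and> (\<forall>t\<ge>0. 0 \<le> \<Psi> t) \<and> (\<forall>t>0. (\<lambda>k. (\<Psi> ^^ k) t) \<longlonglongrightarrow> 0)"

context
  fixes \<Psi> :: "real \<Rightarrow> real"
  assumes \<Psi>: "comparison_function \<Psi>"
begin

lemma comparison_function_mono: "0 \<le> s \<Longrightarrow> s \<le> t \<Longrightarrow> \<Psi> s \<le> \<Psi> t"
  using \<Psi> unfolding comparison_function_def by (auto intro: mono_onD)

lemma comparison_function_nonneg: "0 \<le> t \<Longrightarrow> 0 \<le> \<Psi> t"
  using \<Psi> unfolding comparison_function_def by auto

text \<open>If \<open>\<Psi>\<close> stayed above \<open>c > 0\<close> on \<open>(c, \<infinity>)\<close>, the iterates started there would stay above \<open>c\<close>.\<close>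

lemma comparison_function_crosses: 
  assumes "0 < c"
  shows "\<exists>x>c. \<Psi> x \<le> c"
proof (rule ccontr)
  assume "\<not> (\<exists>x>c. \<Psi> x \<le> c)"
  hence above: "c < \<Psi> x" if "c < x" for x using that by force
  have "c < (\<Psi> ^^ k) (c + 1)" for k by (induction k) (auto intro: above)
  moreover have "(\<lambda>k. (\<Psi> ^^ k) (c + 1)) \<longlonglongrightarrow> 0" using \<Psi> assms unfolding comparison_function_def by simp
  ultimately have "c \<le> 0"
    by (intro tendsto_lowerbound[of "\<lambda>k. (\<Psi> ^^ k) (c + 1)"]) (auto intro: less_imp_le always_eventually)
  thus False using assms by simp
qed

lemma comparison_function_less:
  assumes t: "0 < t"
  shows "\<Psi> t < t"
proof (rule ccontr)
  assume "\<not> \<Psi> t < t"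
  hence ge: "t \<le> \<Psi> t" by simp
  have "t \<le> (\<Psi> ^^ k) t" for k
  proof (induction k)
    case (Suc k)
    have "\<Psi> t \<le> \<Psi> ((\<Psi> ^^ k) t)" using comparison_function_mono[OF _ Suc] t by simp
    thus ?case using ge by simp
  qed simp
  moreover have "(\<lambda>k. (\<Psi> ^^ k) t) \<longlonglongrightarrow> 0" using \<Psi> t unfolding comparison_function_def by simp
  ultimately have "t \<le> 0" by (intro tendsto_lowerbound[of "\<lambda>k. (\<Psi> ^^ k) t"]) (auto intro: always_eventually)
  thus False using t by simp
qed

lemma comparison_function_zero: "\<Psi> 0 = 0"
proof -
  have "\<Psi> 0 \<le> 0 + e" if "0 < e" for e
    using comparison_function_mono[of 0 e] comparison_function_less[OF that] that by simp
  hence "\<Psi> 0 \<le> 0" by (rule field_le_epsilon)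
  thus ?thesis using comparison_function_nonneg[of 0] by simp
qed

lemma comparison_function_le: "0 \<le> t \<Longrightarrow> \<Psi> t \<le> t"
  using comparison_function_less[of t] comparison_function_zero by (cases "t = 0") auto

lemma funpow_comparison_function_tendsto: "0 \<le> t \<Longrightarrow> (\<lambda>k. (\<Psi> ^^ k) t) \<longlonglongrightarrow> 0"
proof (cases "t = 0")
  case True
  have "(\<Psi> ^^ k) 0 = 0" for k by (induction k) (simp_all add: comparison_function_zero)
  thus ?thesis using True by simp
qed (use \<Psi> in \<open>auto simp: comparison_function_def\<close>)

end

text \<open>The converse: the iterates \<open>\<Psi>^k t\<close> decrease to some \<open>c\<close>; if \<open>c > 0\<close>, a point \<open>x > c\<close> with
  \<open>\<Psi> x \<le> c\<close> is eventually passed by the iterates, which then drop to \<open>c\<close> or below.\<close>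

lemma comparison_functionI:
  assumes mono: "mono_on {0..} \<Psi>" and nonneg: "\<And>t. 0 \<le> t \<Longrightarrow> 0 \<le> \<Psi> t"
    and less: "\<And>t. 0 < t \<Longrightarrow> \<Psi> t < t" and crosses: "\<And>c. 0 < c \<Longrightarrow> \<exists>x>c. \<Psi> x \<le> c"
  shows "comparison_function \<Psi>"
  unfolding comparison_function_def
proof (intro conjI allI impI mono nonneg)
  fix t :: real assume t: "0 < t"
  let ?s = "\<lambda>k. (\<Psi> ^^ k) t"
  have s_nonneg: "0 \<le> ?s k" for k by (induction k) (use t nonneg in auto)
  have "\<Psi> s \<le> s" if "0 \<le> s" for s
  proof (cases "s = 0")
    case True
    have "\<Psi> 0 \<le> 0 + c" if c: "0 < c" for c
    proof -
      obtain x where "c < x" "\<Psi> x \<le> c" using crosses[OF c] by blast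
      thus ?thesis using mono_onD[OF mono, of 0 x] c by simp
    qed
    hence "\<Psi> 0 \<le> 0" by (rule field_le_epsilon)
    thus ?thesis using True by simp
  qed (use less that in \<open>auto intro: less_imp_le\<close>)
  hence s_dec: "decseq ?s" using s_nonneg by (intro decseq_SucI) simp
  have small: "\<exists>k. ?s k < \<epsilon>" if \<epsilon>: "0 < \<epsilon>" for \<epsilon>
  proof (rule ccontr)
    assume "\<not> (\<exists>k. ?s k < \<epsilon>)"
    hence ge: "\<epsilon> \<le> ?s k" for k by (simp add: not_less)
    define c where "c = Inf (range ?s)"
    have bdd: "bdd_below (range ?s)" using s_nonneg by (intro bdd_belowI[of _ 0]) auto
    have c_le: "c \<le> ?s k" for k unfolding c_def using bdd by (intro cInf_lower) auto
    have "\<epsilon> \<le> c" unfolding c_def using ge by (intro cInf_greatest) auto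
    hence c: "0 < c" using \<epsilon> by simp
    have c_less: "c < ?s k" for k
    proof (rule ccontr)
      assume "\<not> c < ?s k"
      hence "?s (Suc k) = \<Psi> c" using c_le[of k] by simp
      thus False using less[OF c] c_le[of "Suc k"] by simp
    qed
    obtain x where x: "c < x" "\<Psi> x \<le> c" using crosses[OF c] by blast
    then obtain k where "?s k < x" using cInf_less_iff[of "range ?s" x] bdd unfolding c_def by auto
    hence "?s (Suc k) \<le> \<Psi> x" using mono_onD[OF mono] s_nonneg[of k] by simp
    thus False using x(2) c_less[of "Suc k"] by simp
  qed
  show "?s \<longlonglongrightarrow> 0"
  proof (rule tendstoI)
    fix \<epsilon> :: real assume "0 < \<epsilon>"
    then obtain k where k: "?s k < \<epsilon>" using small by blast
    have "dist (?s i) 0 < \<epsilon>" if "k \<le> i" for i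
      using decseqD[OF s_dec that] k s_nonneg[of i] by simp
    thus "eventually (\<lambda>i. dist (?s i) 0 < \<epsilon>) sequentially" unfolding eventually_sequentially by blast
  qed
qed

lemma comparison_function_Max:
  assumes J: "finite J" "J \<noteq> {}" and \<psi>: "\<And>j. j \<in> J \<Longrightarrow> comparison_function (\<psi> j)"
  shows "comparison_function (\<lambda>t. Max ((\<lambda>j. \<psi> j t) ` J))"
proof (rule comparison_functionI)
  let ?\<Psi> = "\<lambda>t. Max ((\<lambda>j. \<psi> j t) ` J)"
  have le_iff: "?\<Psi> t \<le> c \<longleftrightarrow> (\<forall>j\<in>J. \<psi> j t \<le> c)" for t c using J by (subst Max_le_iff) auto
  have ge: "\<psi> j t \<le> ?\<Psi> t" if "j \<in> J" for j t using J that by (intro Max_ge) auto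
  show "mono_on {0..} ?\<Psi>"
    by (rule mono_onI) (use le_iff ge comparison_function_mono[OF \<psi>] in \<open>meson atLeast_iff order_trans\<close>)
  show "0 \<le> ?\<Psi> t" if "0 \<le> t" for t
    using J(2) ge comparison_function_nonneg[OF \<psi> that] by (meson all_not_in_conv order_trans)
  show "?\<Psi> t < t" if "0 < t" for t
    using J comparison_function_less[OF \<psi> that] by (subst Max_less_iff) auto
  fix c :: real assume c: "0 < c"
  obtain x where x: "\<And>j. j \<in> J \<Longrightarrow> c < x j \<and> \<psi> j (x j) \<le> c"
    using comparison_function_crosses[OF \<psi> c] by metis
  let ?x = "Min (x ` J)"
  have "c < ?x" using J x by (subst Min_gr_iff) auto
  moreover have "\<psi> j ?x \<le> c" if j: "j \<in> J" for j
  proof -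
    have "?x \<le> x j" using J j by (intro Min_le) auto
    hence "\<psi> j ?x \<le> \<psi> j (x j)" using comparison_function_mono[OF \<psi>[OF j]] c \<open>c < ?x\<close> by simp
    thus ?thesis using x[OF j] by simp
  qed
  ultimately show "\<exists>x>c. ?\<Psi> x \<le> c" using le_iff by blast
qed

lemma gen_matkowski_common_comparison_function:
  fixes \<phi> :: "nat \<Rightarrow> 'a::metric_space list \<Rightarrow> 'a"
  assumes n: "0 < n" and \<phi>: "\<forall>j<n. gen_matkowski m (\<phi> j)"
  obtains \<Psi> where "comparison_function \<Psi>"
    and "\<And>j x y. j < n \<Longrightarrow> x \<in> Xpow m \<Longrightarrow> y \<in> Xpow m \<Longrightarrow> dist (\<phi> j x) (\<phi> j y) \<le> \<Psi> (dmax m x y)"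
proof -
  have "\<exists>\<psi>. comparison_function \<psi> \<and> (\<forall>x\<in>Xpow m. \<forall>y\<in>Xpow m. dist (\<phi> j x) (\<phi> j y) \<le> \<psi> (dmax m x y))"
    if j: "j < n" for j
  proof -
    obtain \<psi> where "mono_on {0..} \<psi>" "\<psi> ` {0..} \<subseteq> {0..}" "\<forall>t>0. (\<lambda>k. (\<psi> ^^ k) t) \<longlonglongrightarrow> 0"
      and "\<forall>x\<in>Xpow m. \<forall>y\<in>Xpow m. dist (\<phi> j x) (\<phi> j y) \<le> \<psi> (dmax m x y)"
      using \<phi> j unfolding gen_matkowski_def by blast
    thus ?thesis unfolding comparison_function_def by (intro exI[of _ \<psi>]) auto
  qed
  then obtain \<psi> where \<psi>: "\<And>j. j < n \<Longrightarrow> comparison_function (\<psi> j) \<and>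
      (\<forall>x\<in>Xpow m. \<forall>y\<in>Xpow m. dist (\<phi> j x) (\<phi> j y) \<le> \<psi> j (dmax m x y))"
    by metis
  let ?\<Psi> = "\<lambda>t. Max ((\<lambda>j. \<psi> j t) ` {..<n})"
  have "comparison_function ?\<Psi>" by (rule comparison_function_Max) (use n \<psi> in auto)
  moreover have "dist (\<phi> j x) (\<phi> j y) \<le> ?\<Psi> (dmax m x y)" if "j < n" "x \<in> Xpow m" "y \<in> Xpow m" for j x y
  proof -
    have "\<psi> j (dmax m x y) \<le> ?\<Psi> (dmax m x y)" using that(1) by (intro Max_ge) auto
    thus ?thesis using \<psi>[OF that(1)] that(2,3) by fastforce
  qed
  ultimately show ?thesis using that by blast
qed

text \<open>With \<open>D k\<close> the maximum of \<open>m\<close> consecutive terms, \<open>D\<close> is decreasing and \<open>D (k + m) \<le> \<Psi> (D k)\<close>.\<close>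

lemma recursive_comparison_tendsto_zero:
  fixes e :: "nat \<Rightarrow> real"
  assumes \<Psi>: "comparison_function \<Psi>" and m: "m \<ge> 1" and e: "\<And>k. 0 \<le> e k"
    and rec: "\<And>k. e (k + m) \<le> \<Psi> (MAX i\<in>{..<m}. e (k + i))"
  shows "e \<longlonglongrightarrow> 0"
proof -
  define D where "D k = (MAX i\<in>{..<m}. e (k + i))" for k
  have D_ge: "e (k + i) \<le> D k" if "i < m" for k i unfolding D_def using that by (intro Max_ge) auto
  have D_le_iff: "D k \<le> c \<longleftrightarrow> (\<forall>i<m. e (k + i) \<le> c)" for k c
    unfolding D_def using m by (subst Max_le_iff) (auto simp: lessThan_empty_iff)
  have D_nonneg: "0 \<le> D k" for k using D_ge[of 0 k] e[of k] m by simp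
  have rec': "e (k + m) \<le> \<Psi> (D k)" for k using rec unfolding D_def .
  have D_Suc: "D (Suc k) \<le> D k" for k
    unfolding D_le_iff
  proof (intro allI impI)
    fix i assume i: "i < m"
    show "e (Suc k + i) \<le> D k"
    proof (cases "Suc i < m")
      case True thus ?thesis using D_ge[of "Suc i" k] by simp
    next
      case False
      hence "e (Suc k + i) = e (k + m)" using i by (intro arg_cong[where f = e]) simp
      thus ?thesis using rec'[of k] comparison_function_le[OF \<Psi> D_nonneg[of k]] by linarith
    qed
  qed
  hence D_dec: "decseq D" by (rule decseq_SucI)
  have D_step: "D (k + m) \<le> \<Psi> (D k)" for k
    unfolding D_le_iff
  proof (intro allI impI)
    fix i assume "i < m"
    have "e ((k + i) + m) \<le> \<Psi> (D (k + i))" by (rule rec')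
    also have "\<dots> \<le> \<Psi> (D k)" using comparison_function_mono[OF \<Psi> D_nonneg decseqD[OF D_dec]] by simp
    finally show "e (k + m + i) \<le> \<Psi> (D k)" by (simp add: algebra_simps)
  qed
  have D_iter: "D (p * m) \<le> (\<Psi> ^^ p) (D 0)" for p
  proof (induction p)
    case (Suc p)
    have "D (Suc p * m) \<le> \<Psi> (D (p * m))" using D_step[of "p * m"] by (simp add: algebra_simps)
    also have "\<dots> \<le> \<Psi> ((\<Psi> ^^ p) (D 0))" using comparison_function_mono[OF \<Psi> D_nonneg Suc] .
    finally show ?case by simp
  qed simp
  have e_le: "e k \<le> (\<Psi> ^^ (k div m)) (D 0)" for k
  proof -
    have "k mod m < m" using m by simp
    from D_ge[OF this, of "k div m * m"] have "e k \<le> D (k div m * m)" by simp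
    thus ?thesis using D_iter[of "k div m"] by simp
  qed
  have lim: "(\<lambda>k. (\<Psi> ^^ (k div m)) (D 0)) \<longlonglongrightarrow> 0"
    using filterlim_compose[OF funpow_comparison_function_tendsto[OF \<Psi> D_nonneg]
        filterlim_at_top_div_const_nat] m by simp
  show ?thesis
    by (rule tendsto_sandwich[where f = "\<lambda>k. 0" and h = "\<lambda>k. (\<Psi> ^^ (k div m)) (D 0)"])
      (use lim e e_le in \<open>auto intro: always_eventually\<close>)
qed

section \<open>Fixed points of comparison contractions\<close>

locale complete_metric_on =
  fixes S :: "'b set" and d :: "'b \<Rightarrow> 'b \<Rightarrow> real"
  assumes nonneg: "x \<in> S \<Longrightarrow> y \<in> S \<Longrightarrow> 0 \<le> d x y"
    and self: "x \<in> S \<Longrightarrow> d x x = 0"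
    and commute: "d x y = d y x"
    and triangle: "x \<in> S \<Longrightarrow> y \<in> S \<Longrightarrow> z \<in> S \<Longrightarrow> d x z \<le> d x y + d y z"
    and le_0_imp_eq: "x \<in> S \<Longrightarrow> y \<in> S \<Longrightarrow> d x y \<le> 0 \<Longrightarrow> x = y"
    and complete: "\<And>x. (\<And>k. x k \<in> S) \<Longrightarrow> \<forall>e>0. \<exists>N. \<forall>p\<ge>N. \<forall>q\<ge>N. d (x p) (x q) \<le> e
                  \<Longrightarrow> \<exists>l\<in>S. (\<lambda>k. d (x k) l) \<longlonglongrightarrow> 0"
begin

context
  fixes \<Psi> :: "real \<Rightarrow> real" and f :: "'b \<Rightarrow> 'b"
  assumes \<Psi>: "comparison_function \<Psi>" and maps: "\<And>x. x \<in> S \<Longrightarrow> f x \<in> S"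
    and contr: "\<And>x y. x \<in> S \<Longrightarrow> y \<in> S \<Longrightarrow> d (f x) (f y) \<le> \<Psi> (d x y)"
begin

text \<open>Matkowski's argument: once \<open>d (x k) (x (k+1)) < \<epsilon> - \<Psi> \<epsilon>\<close>, the ball of radius \<open>\<epsilon>\<close> about
  \<open>x k\<close> contains all later iterates.\<close>

lemma Cauchy_iterates:
  assumes x0: "x0 \<in> S"
  shows "\<forall>e>0. \<exists>N. \<forall>p\<ge>N. \<forall>q\<ge>N. d ((f ^^ p) x0) ((f ^^ q) x0) \<le> e"
proof -
  let ?x = "\<lambda>k. (f ^^ k) x0"
  have xS: "?x k \<in> S" for k by (induction k) (use x0 maps in auto)
  have step: "d (?x k) (?x (Suc k)) \<le> (\<Psi> ^^ k) (d (?x 0) (?x 1))" for k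
  proof (induction k)
    case (Suc k)
    have "d (?x (Suc k)) (?x (Suc (Suc k))) \<le> \<Psi> (d (?x k) (?x (Suc k)))"
      using contr[OF xS[of k] xS[of "Suc k"]] by simp
    also have "\<dots> \<le> \<Psi> ((\<Psi> ^^ k) (d (?x 0) (?x 1)))"
      using comparison_function_mono[OF \<Psi> nonneg[OF xS xS] Suc] .
    finally show ?case by simp
  qed simp
  have ball: "\<exists>k. \<forall>p. d (?x k) (?x (k + p)) \<le> \<epsilon>" if \<epsilon>: "0 < \<epsilon>" for \<epsilon>
  proof -
    have "0 < \<epsilon> - \<Psi> \<epsilon>" using comparison_function_less[OF \<Psi> \<epsilon>] by simp
    with funpow_comparison_function_tendsto[OF \<Psi> nonneg[OF xS xS]]
    have "eventually (\<lambda>k. dist ((\<Psi> ^^ k) (d (?x 0) (?x 1))) 0 < \<epsilon> - \<Psi> \<epsilon>) sequentially"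
      by (rule tendstoD)
    then obtain k where "dist ((\<Psi> ^^ k) (d (?x 0) (?x 1))) 0 < \<epsilon> - \<Psi> \<epsilon>"
      unfolding eventually_sequentially by blast
    hence k: "d (?x k) (?x (Suc k)) < \<epsilon> - \<Psi> \<epsilon>"
      using step[of k] abs_ge_self[of "(\<Psi> ^^ k) (d (?x 0) (?x 1))"] by (simp add: dist_real_def)
    have "d (?x k) (?x (k + p)) \<le> \<epsilon>" for p
    proof (induction p)
      case (Suc p)
      have "d (?x k) (?x (k + Suc p)) \<le> d (?x k) (?x (Suc k)) + d (?x (Suc k)) (?x (Suc (k + p)))"
        using triangle[OF xS[of k] xS[of "Suc k"] xS[of "Suc (k + p)"]] by simp
      also have "d (?x (Suc k)) (?x (Suc (k + p))) \<le> \<Psi> (d (?x k) (?x (k + p)))"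
        using contr[OF xS[of k] xS[of "k + p"]] by simp
      also have "\<dots> \<le> \<Psi> \<epsilon>" using comparison_function_mono[OF \<Psi> nonneg[OF xS xS] Suc] .
      finally show ?case using k by simp
    qed (use self[OF xS] \<epsilon> in simp)
    thus ?thesis by blast
  qed
  show ?thesis
  proof (intro allI impI)
    fix e :: real assume "0 < e"
    then obtain k where k: "\<And>p. d (?x k) (?x (k + p)) \<le> e / 2" using ball[of "e / 2"] by auto
    have "d (?x p) (?x q) \<le> e" if "k \<le> p" "k \<le> q" for p q
    proof -
      obtain p' q' where "p = k + p'" "q = k + q'" using \<open>k \<le> p\<close> \<open>k \<le> q\<close> by (metis le_add_diff_inverse)
      thus ?thesis using triangle[OF xS[of p] xS[of k] xS[of q]] k[of p'] k[of q'] commute[of "?x p"] by simp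
    qed
    thus "\<exists>N. \<forall>p\<ge>N. \<forall>q\<ge>N. d (?x p) (?x q) \<le> e" by blast
  qed
qed

lemma comparison_contraction_fixpoint:
  assumes "S \<noteq> {}"
  shows "\<exists>x\<in>S. f x = x"
proof -
  obtain x0 where x0: "x0 \<in> S" using assms by blast
  let ?x = "\<lambda>k. (f ^^ k) x0"
  have xS: "?x k \<in> S" for k by (induction k) (use x0 maps in auto)
  obtain l where l: "l \<in> S" "(\<lambda>k. d (?x k) l) \<longlonglongrightarrow> 0"
    using complete[OF xS Cauchy_iterates[OF x0]] by blast
  have le: "d l (f l) \<le> d (?x (Suc k)) l + d (?x k) l" for k
  proof -
    have "d l (f l) \<le> d l (?x (Suc k)) + d (?x (Suc k)) (f l)" using triangle[OF l(1) xS[of "Suc k"] maps[OF l(1)]] .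
    also have "d (?x (Suc k)) (f l) \<le> \<Psi> (d (?x k) l)" using contr[OF xS[of k] l(1)] by simp
    also have "\<dots> \<le> d (?x k) l" using comparison_function_le[OF \<Psi> nonneg[OF xS[of k] l(1)]] .
    finally show ?thesis using commute[of l] by simp
  qed
  have "(\<lambda>k. d (?x (Suc k)) l + d (?x k) l) \<longlonglongrightarrow> 0 + 0"
    using l(2) LIMSEQ_Suc[OF l(2)] by (intro tendsto_add) auto
  hence "d l (f l) \<le> 0" using le by (intro tendsto_lowerbound) (auto intro: always_eventually)
  hence "l = f l" using le_0_imp_eq[OF l(1) maps[OF l(1)]] by simp
  thus ?thesis using l(1) by metis
qed

lemma comparison_contraction_fixpoint_unique:
  assumes "x \<in> S" "y \<in> S" "f x = x" "f y = y"
  shows "x = y"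
proof (rule le_0_imp_eq[OF assms(1,2)], rule ccontr)
  assume "\<not> d x y \<le> 0"
  hence "\<Psi> (d x y) < d x y" by (intro comparison_function_less[OF \<Psi>]) simp
  thus False using contr[OF assms(1,2)] assms(3,4) by simp
qed

end

context
  fixes \<Psi> :: "real \<Rightarrow> real" and m :: nat and T :: "'b list \<Rightarrow> 'b"
  assumes \<Psi>: "comparison_function \<Psi>" and m: "m \<ge> 1"
    and maps: "\<And>xs. length xs = m \<Longrightarrow> set xs \<subseteq> S \<Longrightarrow> T xs \<in> S"
    and contr: "\<And>xs ys. length xs = m \<Longrightarrow> set xs \<subseteq> S \<Longrightarrow> length ys = m \<Longrightarrow> set ys \<subseteq> S \<Longrightarrow>
        d (T xs) (T ys) \<le> \<Psi> (MAX i\<in>{..<m}. d (xs ! i) (ys ! i))"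
begin

lemma diagonal_comparison_contraction:
  assumes "x \<in> S" "y \<in> S"
  shows "d (T (replicate m x)) (T (replicate m y)) \<le> \<Psi> (d x y)"
proof -
  have "(\<lambda>i. d x y) ` {..<m} = {d x y}" using m by (auto simp: image_constant_conv lessThan_empty_iff)
  thus ?thesis using contr[of "replicate m x" "replicate m y"] assms by (simp add: set_replicate_conv_if)
qed

lemma diagonal_maps: "x \<in> S \<Longrightarrow> T (replicate m x) \<in> S"
  by (rule maps) auto

lemma diagonal_fixpoint_exists: "S \<noteq> {} \<Longrightarrow> \<exists>x\<in>S. T (replicate m x) = x"
  by (rule comparison_contraction_fixpoint[OF \<Psi> diagonal_maps diagonal_comparison_contraction])

lemma diagonal_fixpoint_unique:
  "x \<in> S \<Longrightarrow> y \<in> S \<Longrightarrow> T (replicate m x) = x \<Longrightarrow> T (replicate m y) = y \<Longrightarrow> x = y"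
  by (rule comparison_contraction_fixpoint_unique[OF \<Psi> diagonal_maps diagonal_comparison_contraction])

lemma tendsto_fixpoint_of_recursion:
  assumes x: "x \<in> S" "T (replicate m x) = x"
    and u0: "\<forall>i<m. u i \<in> S" and rec: "\<forall>k. u (k + m) = T (map (\<lambda>i. u (k + m - 1 - i)) [0..<m])"
  shows "(\<lambda>k. d (u k) x) \<longlonglongrightarrow> 0"
proof -
  have uS: "u k \<in> S" for k
  proof (induction k rule: less_induct)
    case (less k)
    show ?case
    proof (cases "k < m")
      case False
      then obtain k' where k': "k = k' + m" by (metis add.commute le_add_diff_inverse not_less)
      hence "set (map (\<lambda>i. u (k' + m - 1 - i)) [0..<m]) \<subseteq> S" using less m by auto
      thus ?thesis using rec maps k' by simp
    qed (use u0 in simp)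
  qed
  show ?thesis
  proof (rule recursive_comparison_tendsto_zero[OF \<Psi> m])
    show "0 \<le> d (u k) x" for k using nonneg[OF uS x(1)] .
    fix k
    let ?xs = "map (\<lambda>i. u (k + m - 1 - i)) [0..<m]"
    let ?D = "MAX i\<in>{..<m}. d (u (k + i)) x"
    have D_ge: "d (u (k + i)) x \<le> ?D" if "i < m" for i using that by (intro Max_ge) auto
    have "d (u (k + m)) x = d (T ?xs) (T (replicate m x))" using rec x(2) by simp
    also have "\<dots> \<le> \<Psi> (MAX i\<in>{..<m}. d (?xs ! i) (replicate m x ! i))" by (rule contr) (use uS x in auto)
    also have "\<dots> \<le> \<Psi> ?D"
    proof (rule comparison_function_mono[OF \<Psi>])
      have "d (?xs ! 0) (replicate m x ! 0) \<le> (MAX i\<in>{..<m}. d (?xs ! i) (replicate m x ! i))"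
        using m by (intro Max_ge) auto
      moreover have "0 \<le> d (?xs ! 0) (replicate m x ! 0)" using nonneg[OF uS x(1)] m by simp
      ultimately show "0 \<le> (MAX i\<in>{..<m}. d (?xs ! i) (replicate m x ! i))" by linarith
      have "d (?xs ! i) (replicate m x ! i) \<le> ?D" if "i < m" for i
        using D_ge[of "m - 1 - i"] that by (simp add: algebra_simps)
      thus "(MAX i\<in>{..<m}. d (?xs ! i) (replicate m x ! i)) \<le> ?D"
        using m by (subst Max_le_iff) (auto simp: lessThan_empty_iff)
    qed
    finally show "d (u (k + m)) x \<le> \<Psi> ?D" .
  qed
qed

end

end

lemma indicator_point_Fstar: "(\<lambda>x. if x = a then 1 else 0) \<in> (Fstar :: ('a::metric_space \<Rightarrow> real) set)"
proof -
  let ?w = "\<lambda>x::'a. if x = a then 1 else (0::real)"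
  have "{x. \<alpha> \<le> ?w x} = {a}" if "0 < \<alpha>" "\<alpha> \<le> 1" for \<alpha> using that by auto
  hence "usc ?w" by (intro usc_if_closed_superlevels) auto
  moreover have "{x. 0 < ?w x} = {a}" by auto
  hence "level ?w 0 = {a}" unfolding level_def by simp
  ultimately show ?thesis unfolding Fstar_def by auto
qed

lemma complete_metric_on_Fstar: "complete_metric_on (Fstar :: ('a::complete_space \<Rightarrow> real) set) d_inf"
  by unfold_locales (auto intro: d_inf_nonneg d_inf_self d_inf_commute d_inf_triangle d_inf_le_0_imp_eq
      Fstar_complete)

lemma (in gifzs) ZS_contraction:
  assumes \<Psi>: "comparison_function \<Psi>"
    and contr: "\<And>j x y. j < n \<Longrightarrow> x \<in> Xpow m \<Longrightarrow> y \<in> Xpow m \<Longrightarrow> dist (\<phi> j x) (\<phi> j y) \<le> \<Psi> (dmax m x y)"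
    and xs: "length xs = m" "set xs \<subseteq> Fstar" and ys: "length ys = m" "set ys \<subseteq> Fstar"
  shows "d_inf (ZS m n \<phi> \<rho> xs) (ZS m n \<phi> \<rho> ys) \<le> \<Psi> (MAX i\<in>{..<m}. d_inf (xs ! i) (ys ! i))"
proof -
  have "\<forall>i<m. xs ! i \<in> Fstar" "\<forall>i<m. ys ! i \<in> Fstar" using xs ys by (auto dest: nth_mem)
  moreover have "d_inf (xs ! i) (ys ! i) \<le> (MAX i\<in>{..<m}. d_inf (xs ! i) (ys ! i))" if "i < m" for i
    using that by (intro Max_ge) auto
  moreover have "mono_on {0..} \<Psi>" using \<Psi> unfolding comparison_function_def by simp
  ultimately show ?thesis by (rule d_inf_ZS_le[OF _ _ _ _ contr])
qed

theorem mainTheorem12: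
  fixes \<phi> :: "nat \<Rightarrow> 'a::complete_space list \<Rightarrow> 'a"
    and \<rho> :: "nat \<Rightarrow> real \<Rightarrow> real"
    and m n :: nat
  assumes "m \<ge> 1"
    and "\<forall>j<n. cont_m m (\<phi> j)"
    and "admissible n \<rho>"
    and "\<forall>j<n. gen_matkowski m (\<phi> j)"
  shows "\<exists>uZ. uZ \<in> Fstar \<and> uZ = ZS m n \<phi> \<rho> (replicate m uZ)
           \<and> (\<forall>v. v \<in> Fstar \<and> v = ZS m n \<phi> \<rho> (replicate m v) \<longrightarrow> v = uZ)
           \<and> (\<forall>u. (\<forall>i<m. u i \<in> Fstar) \<longrightarrow>
                (\<forall>k. u (k + m) = ZS m n \<phi> \<rho> (map (\<lambda>i. u (k + m - 1 - i)) [0..<m])) \<longrightarrow>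
                (\<lambda>k. d_inf (u k) uZ) \<longlonglongrightarrow> 0)"
proof -
  interpret gifzs m n \<phi> \<rho> using assms(1-3) by unfold_locales auto
  interpret complete_metric_on "Fstar :: ('a \<Rightarrow> real) set" d_inf by (rule complete_metric_on_Fstar)
  obtain \<Psi> where \<Psi>: "comparison_function \<Psi>"
    and contr: "\<And>j x y. j < n \<Longrightarrow> x \<in> Xpow m \<Longrightarrow> y \<in> Xpow m \<Longrightarrow> dist (\<phi> j x) (\<phi> j y) \<le> \<Psi> (dmax m x y)"
    using gen_matkowski_common_comparison_function[OF n_pos assms(4)] by blast
  have maps: "ZS m n \<phi> \<rho> xs \<in> Fstar" if "length xs = m" "set xs \<subseteq> Fstar" for xs
    using ZS_Fstar that nth_mem by blast
  note T = \<Psi> assms(1) maps ZS_contraction[OF \<Psi> contr]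
  have "Fstar \<noteq> {}" using indicator_point_Fstar by blast
  then obtain uZ where uZ: "uZ \<in> Fstar" "ZS m n \<phi> \<rho> (replicate m uZ) = uZ"
    using diagonal_fixpoint_exists[OF T] by blast
  show ?thesis
  proof (intro exI[of _ uZ] conjI allI impI)
    show "uZ \<in> Fstar" by (rule uZ(1))
    show "uZ = ZS m n \<phi> \<rho> (replicate m uZ)" by (rule uZ(2)[symmetric])
    show "v = uZ" if v: "v \<in> Fstar \<and> v = ZS m n \<phi> \<rho> (replicate m v)" for v
      using diagonal_fixpoint_unique[OF T conjunct1[OF v] uZ(1) conjunct2[OF v, symmetric] uZ(2)] .
    show "(\<lambda>k. d_inf (u k) uZ) \<longlonglongrightarrow> 0"
      if "\<forall>i<m. u i \<in> Fstar" "\<forall>k. u (k + m) = ZS m n \<phi> \<rho> (map (\<lambda>i. u (k + m - 1 - i)) [0..<m])" for u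
      by (rule tendsto_fixpoint_of_recursion[OF T uZ that])
  qed
qed

end
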